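(* Every nontrivial totally geodesic subset of $\mathbb{H}^2\times\mathbb{R}$ is either a horizontal plane $\mathbb{H}^2\times\{r\}$ for some $r\in\mathbb{R}$, or a vertical plane $\gamma\times\mathbb{R}$ for some geodesic $\gamma$ of $\mathbb{H}^2$.
   Context: $\mathbb{H}^2\times\mathbb{R}$ carries the Riemannian product metric. A geodesic is the image of a locally isometric immersion of the whole real line. A totally geodesic subset is a nonempty subset $X$ such that any two points of $X$ are joined by a geodesic contained in $X$; it is trivial if it is a single geodesic or the whole space, and nontrivial otherwise. *)

theory Defs
  imports Complex_Main
begin

text \<open>Upper half-plane model of the hyperbolic plane H^2.\<close>
definition H2 :: "complex set" where
  "H2 = {z. Im z > 0}"

definition hdist :: "complex \<Rightarrow> complex \<Rightarrow> real" where
  "hdist z w = arcosh (1 + (cmod (z - w))\<^sup>2 / (2 * Im z * Im w))"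

definition HR :: "(complex \<times> real) set" where
  "HR = H2 \<times> UNIV"

definition pdist :: "complex \<times> real \<Rightarrow> complex \<times> real \<Rightarrow> real" where
  "pdist p q = sqrt ((hdist (fst p) (fst q))\<^sup>2 + (snd p - snd q)\<^sup>2)"

definition local_isometry_line :: "('a \<Rightarrow> 'a \<Rightarrow> real) \<Rightarrow> 'a set \<Rightarrow> (real \<Rightarrow> 'a) \<Rightarrow> bool" where
  "local_isometry_line d S c \<longleftrightarrow> (\<forall>t. c t \<in> S) \<and>
     (\<forall>t. \<exists>e>0. \<forall>s u. \<bar>s - t\<bar> < e \<longrightarrow> \<bar>u - t\<bar> < e \<longrightarrow> d (c s) (c u) = \<bar>s - u\<bar>)"

definition is_geodesic :: "('a \<Rightarrow> 'a \<Rightarrow> real) \<Rightarrow> 'a set \<Rightarrow> 'a set \<Rightarrow> bool" where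
  "is_geodesic d S G \<longleftrightarrow> (\<exists>c. local_isometry_line d S c \<and> G = range c)"

definition totally_geodesic :: "('a \<Rightarrow> 'a \<Rightarrow> real) \<Rightarrow> 'a set \<Rightarrow> 'a set \<Rightarrow> bool" where
  "totally_geodesic d S X \<longleftrightarrow> X \<noteq> {} \<and> X \<subseteq> S \<and>
     (\<forall>p\<in>X. \<forall>q\<in>X. \<exists>G. is_geodesic d S G \<and> G \<subseteq> X \<and> p \<in> G \<and> q \<in> G)"

definition nontrivial_totally_geodesic :: "('a \<Rightarrow> 'a \<Rightarrow> real) \<Rightarrow> 'a set \<Rightarrow> 'a set \<Rightarrow> bool" where
  "nontrivial_totally_geodesic d S X \<longleftrightarrow> totally_geodesic d S X \<and>
     \<not> is_geodesic d S X \<and> X \<noteq> S"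

end

(*
  Work in the hyperboloid model of the hyperbolic plane, where the geodesics are the curves
  cosh t X + sinh t V. The geodesics of the product with R pair such a curve, run at speed a,
  with an affine function of slope b, where a^2 + b^2 = 1; the equality case of the triangle
  inequality shows that two distinct points lie on exactly one of them, so a totally geodesic
  set X is a set closed under these lines. Then the projection Y of X to the hyperbolic plane
  is closed under hyperbolic lines, and in the Klein model, where lines become chords of the
  disc, such a set is a point, a line or the whole plane.

  If X contains two points over the same base point, the flats through this vertical line
  fill X out to Y x R. Otherwise X is the graph of a height function over Y. If the height is
  constant, X is a horizontal plane. If not, X contains three points spanning a flat, which
  forces Y to be the whole plane, and the height is affine along every geodesic. The level sets
  of such a function would be disjoint lines, one through every point; but through a point off
  a line pass two lines missing it, so both would have to be the level line through that point.
*)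
theory Submission
  imports Defs "HOL-Analysis.Analysis"
begin

section \<open>The hyperboloid model\<close>

type_synonym v3 = "real \<times> real \<times> real"

definition mink :: "v3 \<Rightarrow> v3 \<Rightarrow> real" where
  "mink x y = fst x * fst y - fst (snd x) * fst (snd y) - snd (snd x) * snd (snd y)"

lemma mink_simps [simp]: "mink (a, b, c) (d, e, f) = a * d - b * e - c * f"
  by (simp add: mink_def)

lemma mink_commute: "mink x y = mink y x"
  by (simp add: mink_def algebra_simps)

lemma mink_add_left: "mink (x + y) z = mink x z + mink y z"
  and mink_add_right: "mink z (x + y) = mink z x + mink z y"
  and mink_diff_left: "mink (x - y) z = mink x z - mink y z"
  and mink_diff_right: "mink z (x - y) = mink z x - mink z y"
  and mink_scaleR_left: "mink (a *\<^sub>R x) z = a * mink x z"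
  and mink_scaleR_right: "mink z (a *\<^sub>R x) = a * mink z x"
  and mink_minus_left: "mink (- x) z = - mink x z"
  and mink_minus_right: "mink z (- x) = - mink z x"
  by (simp_all add: mink_def algebra_simps)

lemmas mink_linear = mink_add_left mink_add_right mink_diff_left mink_diff_right
  mink_scaleR_left mink_scaleR_right mink_minus_left mink_minus_right

definition hyperboloid :: "v3 set" where
  "hyperboloid = {x. mink x x = 1 \<and> fst x > 0}"

lemma hyperboloid_iff: "(a, b, c) \<in> hyperboloid \<longleftrightarrow> a * a - b * b - c * c = 1 \<and> a > 0"
  by (simp add: hyperboloid_def)

lemma reverse_cauchy_schwarz:
  fixes x0 x1 x2 y0 y1 y2 :: real
  assumes x: "x0 * x0 - x1 * x1 - x2 * x2 = 1" "x0 > 0"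
    and y: "y0 * y0 - y1 * y1 - y2 * y2 = 1" "y0 > 0"
  shows "x0 * y0 - x1 * y1 - x2 * y2 \<ge> 1"
    and "x0 * y0 - x1 * y1 - x2 * y2 = 1 \<Longrightarrow> x0 = y0 \<and> x1 = y1 \<and> x2 = y2"
proof -
  define s where "s = x1 * y1 + x2 * y2"
  define e where "e = (x1 - y1)\<^sup>2 + (x2 - y2)\<^sup>2 + (x1 * y2 - x2 * y1)\<^sup>2"
  \<comment> \<open>Lagrange's identity\<close>
  have lagrange: "(x0 * y0)\<^sup>2 = (1 + s)\<^sup>2 + e"
  proof -
    have "(x0 * y0)\<^sup>2 = (x0 * x0) * (y0 * y0)" by (simp add: power2_eq_square)
    also have "\<dots> = (1 + x1 * x1 + x2 * x2) * (1 + y1 * y1 + y2 * y2)"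
      using x y by (simp add: algebra_simps)
    finally have "(x0 * y0)\<^sup>2 = (1 + x1 * x1 + x2 * x2) * (1 + y1 * y1 + y2 * y2)" .
    then show ?thesis by (simp add: s_def e_def power2_eq_square algebra_simps)
  qed
  have "e \<ge> 0" by (simp add: e_def)
  then have "(1 + s)\<^sup>2 \<le> (x0 * y0)\<^sup>2" using lagrange by simp
  moreover have "0 \<le> x0 * y0" using x(2) y(2) by simp
  ultimately have "1 + s \<le> x0 * y0" by (rule power2_le_imp_le)
  then show "x0 * y0 - x1 * y1 - x2 * y2 \<ge> 1" by (simp add: s_def)
  assume "x0 * y0 - x1 * y1 - x2 * y2 = 1"
  then have "x0 * y0 = 1 + s" by (simp add: s_def)
  then have "e = 0" using lagrange by simp
  then have "x1 = y1" "x2 = y2" by (simp_all add: e_def add_nonneg_eq_0_iff)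
  moreover from this have "x0\<^sup>2 = y0\<^sup>2" using x(1) y(1) by (simp add: power2_eq_square)
  then have "x0 = y0" using x(2) y(2) by (simp add: power2_eq_iff)
  ultimately show "x0 = y0 \<and> x1 = y1 \<and> x2 = y2" by simp
qed

lemma mink_ge_1:
  assumes "X \<in> hyperboloid" "Y \<in> hyperboloid"
  shows "mink X Y \<ge> 1"
proof -
  obtain x0 x1 x2 y0 y1 y2 where "X = (x0, x1, x2)" "Y = (y0, y1, y2)"
    by (cases X, cases Y) auto
  with assms reverse_cauchy_schwarz(1)[of x0 x1 x2 y0 y1 y2] show ?thesis
    by (simp add: hyperboloid_iff)
qed

lemma mink_eq_1_iff:
  assumes "X \<in> hyperboloid" "Y \<in> hyperboloid"
  shows "mink X Y = 1 \<longleftrightarrow> X = Y"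
proof
  obtain x0 x1 x2 y0 y1 y2 where "X = (x0, x1, x2)" "Y = (y0, y1, y2)"
    by (cases X, cases Y) auto
  with assms reverse_cauchy_schwarz(2)[of x0 x1 x2 y0 y1 y2] show "mink X Y = 1 \<Longrightarrow> X = Y"
    by (simp add: hyperboloid_iff)
qed (use assms in \<open>simp add: hyperboloid_def\<close>)

lemma hyperboloid_if_mink_pos:
  assumes X: "X \<in> hyperboloid" and Y: "mink Y Y = 1" and pos: "mink X Y > 0"
  shows "Y \<in> hyperboloid"
proof (rule ccontr)
  assume "Y \<notin> hyperboloid"
  then have "fst Y \<le> 0" using Y by (simp add: hyperboloid_def)
  moreover have "fst Y \<noteq> 0"
  proof
    assume "fst Y = 0"
    then have "mink Y Y = - (fst (snd Y))\<^sup>2 - (snd (snd Y))\<^sup>2"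
      by (simp add: mink_def power2_eq_square)
    also have "\<dots> \<le> 0" by simp
    finally show False using Y by simp
  qed
  ultimately have "- Y \<in> hyperboloid" using Y by (cases Y) (simp add: hyperboloid_iff)
  then have "mink X (- Y) \<ge> 1" using mink_ge_1[OF X] by blast
  then show False using pos by (simp add: mink_minus_right)
qed

text \<open>The standard isometry of the upper half-plane onto the hyperboloid, and its inverse.\<close>
definition hp_to_hyp :: "complex \<Rightarrow> v3" where
  "hp_to_hyp z = ((1 + (Re z)\<^sup>2 + (Im z)\<^sup>2) / (2 * Im z), ((Re z)\<^sup>2 + (Im z)\<^sup>2 - 1) / (2 * Im z),
     Re z / Im z)"

definition hyp_to_hp :: "v3 \<Rightarrow> complex" where
  "hyp_to_hp X = Complex (snd (snd X) / (fst X - fst (snd X))) (1 / (fst X - fst (snd X)))"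

lemma mink_hp_to_hyp:
  assumes "Im z > 0" "Im w > 0"
  shows "mink (hp_to_hyp z) (hp_to_hyp w) = 1 + (cmod (z - w))\<^sup>2 / (2 * Im z * Im w)"
proof -
  obtain a b c d where z: "z = Complex a b" and w: "w = Complex c d"
    by (cases z, cases w) auto
  have "b > 0" "d > 0" using assms z w by auto
  then have "mink (hp_to_hyp z) (hp_to_hyp w) = 1 + ((a - c)\<^sup>2 + (b - d)\<^sup>2) / (2 * b * d)"
    by (simp add: z w hp_to_hyp_def field_simps) (simp add: power2_eq_square algebra_simps)
  then show ?thesis by (simp add: z w cmod_power2)
qed

lemma hp_to_hyp_in_hyperboloid: "Im z > 0 \<Longrightarrow> hp_to_hyp z \<in> hyperboloid"
  using mink_hp_to_hyp[of z z] by (simp add: hyperboloid_def hp_to_hyp_def add_pos_nonneg)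

lemma hyperboloid_fst_gt:
  assumes "X \<in> hyperboloid"
  shows "fst (snd X) < fst X"
proof (rule ccontr)
  assume "\<not> ?thesis"
  then have "(fst X)\<^sup>2 \<le> (fst (snd X))\<^sup>2"
    using assms by (intro power_mono) (auto simp: hyperboloid_def)
  moreover have "mink X X = (fst X)\<^sup>2 - (fst (snd X))\<^sup>2 - (snd (snd X))\<^sup>2"
    by (simp add: mink_def power2_eq_square)
  ultimately show False using assms by (simp add: hyperboloid_def) (smt (verit) zero_le_power2)
qed

lemma Im_hyp_to_hp: "X \<in> hyperboloid \<Longrightarrow> Im (hyp_to_hp X) > 0"
  using hyperboloid_fst_gt[of X] by (simp add: hyp_to_hp_def)

lemma hyp_to_hp_inverse: "Im z > 0 \<Longrightarrow> hyp_to_hp (hp_to_hyp z) = z"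
  by (cases z) (simp add: hyp_to_hp_def hp_to_hyp_def field_simps power2_eq_square)

lemma hp_to_hyp_inverse:
  assumes "X \<in> hyperboloid"
  shows "hp_to_hyp (hyp_to_hp X) = X"
proof -
  obtain x0 x1 x2 where X: "X = (x0, x1, x2)" by (cases X) auto
  define q where "q = x0 - x1"
  have h: "x0 * x0 - x1 * x1 - x2 * x2 = 1" and q: "q > 0"
    using assms hyperboloid_fst_gt[OF assms] by (auto simp: X q_def hyperboloid_iff)
  have e1: "q\<^sup>2 + x2\<^sup>2 + 1 = 2 * x0 * q" and e2: "x2\<^sup>2 + 1 - q\<^sup>2 = 2 * x1 * q"
    using h by (simp_all add: q_def power2_eq_square algebra_simps)
  have "hyp_to_hp X = Complex (x2 / q) (1 / q)" by (simp add: X hyp_to_hp_def q_def)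
  then have "hp_to_hyp (hyp_to_hp X) = ((1 + (x2 / q)\<^sup>2 + (1 / q)\<^sup>2) / (2 * (1 / q)),
      ((x2 / q)\<^sup>2 + (1 / q)\<^sup>2 - 1) / (2 * (1 / q)), (x2 / q) / (1 / q))"
    by (simp add: hp_to_hyp_def)
  also have "\<dots> = ((q\<^sup>2 + x2\<^sup>2 + 1) / (2 * q), (x2\<^sup>2 + 1 - q\<^sup>2) / (2 * q), x2)"
    using q by (simp add: field_simps power2_eq_square)
  also have "\<dots> = X" using q by (simp add: X e1 e2)
  finally show ?thesis .
qed

definition hyp_dist :: "v3 \<Rightarrow> v3 \<Rightarrow> real" where
  "hyp_dist X Y = arcosh (mink X Y)"

lemma hdist_eq_hyp_dist: "Im z > 0 \<Longrightarrow> Im w > 0 \<Longrightarrow> hdist z w = hyp_dist (hp_to_hyp z) (hp_to_hyp w)"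
  by (simp add: hdist_def hyp_dist_def mink_hp_to_hyp)

lemma cosh_hyp_dist: "X \<in> hyperboloid \<Longrightarrow> Y \<in> hyperboloid \<Longrightarrow> cosh (hyp_dist X Y) = mink X Y"
  using mink_ge_1[of X Y] by (simp add: hyp_dist_def)

lemma hyp_dist_nonneg: "X \<in> hyperboloid \<Longrightarrow> Y \<in> hyperboloid \<Longrightarrow> hyp_dist X Y \<ge> 0"
  using mink_ge_1[of X Y] by (simp add: hyp_dist_def)

lemma hyp_dist_self: "X \<in> hyperboloid \<Longrightarrow> hyp_dist X X = 0"
  by (simp add: hyp_dist_def hyperboloid_def)

lemma hyp_dist_eq_0_iff: "X \<in> hyperboloid \<Longrightarrow> Y \<in> hyperboloid \<Longrightarrow> hyp_dist X Y = 0 \<longleftrightarrow> X = Y"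
  using mink_ge_1[of X Y] mink_eq_1_iff[of X Y] by (auto simp: hyp_dist_def hyperboloid_def)

lemma hyp_dist_pos: "X \<in> hyperboloid \<Longrightarrow> Y \<in> hyperboloid \<Longrightarrow> X \<noteq> Y \<Longrightarrow> hyp_dist X Y > 0"
  using hyp_dist_nonneg[of X Y] hyp_dist_eq_0_iff[of X Y] by linarith

definition hyp_geod :: "v3 \<Rightarrow> v3 \<Rightarrow> real \<Rightarrow> v3" where
  "hyp_geod X V s = cosh s *\<^sub>R X + sinh s *\<^sub>R V"

definition unit_tangent :: "v3 \<Rightarrow> v3 \<Rightarrow> bool" where
  "unit_tangent X V \<longleftrightarrow> X \<in> hyperboloid \<and> mink X V = 0 \<and> mink V V = -1"

text \<open>The Lorentzian cross product: \<open>mink_cross X V\<close> completes a unit tangent \<open>V\<close> at \<open>X\<close>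
  to an orthonormal frame.\<close>
definition mink_cross :: "v3 \<Rightarrow> v3 \<Rightarrow> v3" where
  "mink_cross a b = (fst (snd a) * snd (snd b) - snd (snd a) * fst (snd b),
     fst a * snd (snd b) - snd (snd a) * fst b, fst (snd a) * fst b - fst a * fst (snd b))"

lemma hyp_geod_0 [simp]: "hyp_geod X V 0 = X"
  by (simp add: hyp_geod_def)

lemma hyp_geod_minus: "hyp_geod X V (- s) = hyp_geod X (- V) s"
  by (simp add: hyp_geod_def)

lemma hyp_geod_add: "hyp_geod X V (s + e) = hyp_geod (hyp_geod X V e) (sinh e *\<^sub>R X + cosh e *\<^sub>R V) s"
  by (simp add: hyp_geod_def cosh_add sinh_add algebra_simps)

lemma unit_tangent_minus: "unit_tangent X V \<Longrightarrow> unit_tangent X (- V)"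
  by (simp add: unit_tangent_def mink_minus_left mink_minus_right)

lemma unit_tangent_frame:
  assumes "unit_tangent X V"
  shows "mink X X = 1" "mink X V = 0" "mink V X = 0" "mink V V = -1"
    "mink X (mink_cross X V) = 0" "mink (mink_cross X V) X = 0"
    "mink V (mink_cross X V) = 0" "mink (mink_cross X V) V = 0"
    "mink (mink_cross X V) (mink_cross X V) = -1"
proof -
  obtain x0 x1 x2 u0 u1 u2 where X: "X = (x0, x1, x2)" and V: "V = (u0, u1, u2)"
    by (cases X, cases V) auto
  have h: "x0 * x0 - x1 * x1 - x2 * x2 = 1" "x0 * u0 - x1 * u1 - x2 * u2 = 0"
    "u0 * u0 - u1 * u1 - u2 * u2 = -1"
    using assms by (auto simp: X V unit_tangent_def hyperboloid_def)
  \<comment> \<open>the Lorentzian analogue of Lagrange's identity\<close>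
  have "mink (mink_cross X V) (mink_cross X V) =
      (x0 * x0 - x1 * x1 - x2 * x2) * (u0 * u0 - u1 * u1 - u2 * u2) - (x0 * u0 - x1 * u1 - x2 * u2)\<^sup>2"
    by (simp add: X V mink_cross_def power2_eq_square algebra_simps)
  then show "mink (mink_cross X V) (mink_cross X V) = -1" using h by simp
  show "mink X X = 1" "mink X V = 0" "mink V X = 0" "mink V V = -1"
    using h by (simp_all add: X V algebra_simps)
  show "mink X (mink_cross X V) = 0" "mink (mink_cross X V) X = 0"
    "mink V (mink_cross X V) = 0" "mink (mink_cross X V) V = 0"
    by (simp_all add: X V mink_cross_def algebra_simps)
qed

lemma unit_tangent_frame_decomp:
  assumes "unit_tangent X V"
  shows "Z = mink Z X *\<^sub>R X - mink Z V *\<^sub>R V - mink Z (mink_cross X V) *\<^sub>R mink_cross X V"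
proof -
  obtain x0 x1 x2 u0 u1 u2 z0 z1 z2 where X: "X = (x0, x1, x2)" and V: "V = (u0, u1, u2)"
    and Z: "Z = (z0, z1, z2)"
    by (cases X, cases V, cases Z) auto
  have h: "x0 * x0 - x1 * x1 - x2 * x2 = 1" "x0 * u0 - x1 * u1 - x2 * u2 = 0"
    "u0 * u0 - u1 * u1 - u2 * u2 = -1"
    using assms by (auto simp: X V unit_tangent_def hyperboloid_def)
  have "z0 = (z0 * x0 - z1 * x1 - z2 * x2) * x0 - (z0 * u0 - z1 * u1 - z2 * u2) * u0 -
      (z0 * (x1 * u2 - x2 * u1) - z1 * (x0 * u2 - x2 * u0) - z2 * (x1 * u0 - x0 * u1)) * (x1 * u2 - x2 * u1)"
    "z1 = (z0 * x0 - z1 * x1 - z2 * x2) * x1 - (z0 * u0 - z1 * u1 - z2 * u2) * u1 -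
      (z0 * (x1 * u2 - x2 * u1) - z1 * (x0 * u2 - x2 * u0) - z2 * (x1 * u0 - x0 * u1)) * (x0 * u2 - x2 * u0)"
    "z2 = (z0 * x0 - z1 * x1 - z2 * x2) * x2 - (z0 * u0 - z1 * u1 - z2 * u2) * u2 -
      (z0 * (x1 * u2 - x2 * u1) - z1 * (x0 * u2 - x2 * u0) - z2 * (x1 * u0 - x0 * u1)) * (x1 * u0 - x0 * u1)"
    using h by algebra+
  then show ?thesis by (simp add: X V Z mink_cross_def)
qed

lemma mink_hyp_geod:
  assumes "unit_tangent X V"
  shows "mink (hyp_geod X V s) (hyp_geod X V u) = cosh (s - u)"
  using unit_tangent_frame[OF assms] by (simp add: hyp_geod_def mink_linear cosh_diff algebra_simps)

lemma hyp_geod_in_hyperboloid: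
  assumes "unit_tangent X V"
  shows "hyp_geod X V s \<in> hyperboloid"
proof (rule hyperboloid_if_mink_pos)
  show "X \<in> hyperboloid" using assms by (simp add: unit_tangent_def)
  show "mink (hyp_geod X V s) (hyp_geod X V s) = 1" using mink_hyp_geod[OF assms, of s s] by simp
  show "mink X (hyp_geod X V s) > 0" using mink_hyp_geod[OF assms, of 0 s] by simp
qed

lemma hyp_dist_hyp_geod:
  assumes "unit_tangent X V"
  shows "hyp_dist (hyp_geod X V s) (hyp_geod X V u) = \<bar>s - u\<bar>"
proof -
  have "hyp_dist (hyp_geod X V s) (hyp_geod X V u) = arcosh (cosh \<bar>s - u\<bar>)"
    by (simp add: hyp_dist_def mink_hyp_geod[OF assms] del: cosh_real_abs) (simp only: cosh_real_abs)
  then show ?thesis by (simp add: arcosh_cosh_real del: cosh_real_abs)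
qed

lemma hyp_geod_inj:
  assumes "unit_tangent X V" "hyp_geod X V s = hyp_geod X V u"
  shows "s = u"
  using hyp_dist_hyp_geod[OF assms(1), of s u] assms(2)
    hyp_dist_self[OF hyp_geod_in_hyperboloid[OF assms(1)]] by simp

lemma unit_tangent_hyp_geod:
  assumes "unit_tangent X V"
  shows "unit_tangent (hyp_geod X V e) (sinh e *\<^sub>R X + cosh e *\<^sub>R V)"
proof -
  note f = unit_tangent_frame[OF assms]
  have "cosh e * cosh e - sinh e * sinh e = 1"
    using hyperbolic_pythagoras[of e] by (simp add: power2_eq_square)
  then show ?thesis using hyp_geod_in_hyperboloid[OF assms] f
    by (simp add: unit_tangent_def hyp_geod_def mink_linear algebra_simps)
qed

definition hyp_dir :: "v3 \<Rightarrow> v3 \<Rightarrow> v3" where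
  "hyp_dir X Y = (1 / sinh (hyp_dist X Y)) *\<^sub>R (Y - cosh (hyp_dist X Y) *\<^sub>R X)"

lemma unit_tangent_hyp_dir:
  assumes X: "X \<in> hyperboloid" and Y: "Y \<in> hyperboloid" and ne: "X \<noteq> Y"
  shows "unit_tangent X (hyp_dir X Y)"
proof -
  define d where "d = hyp_dist X Y"
  have sh: "sinh d \<noteq> 0" using hyp_dist_pos[OF X Y ne] by (simp add: d_def)
  have XY: "mink X Y = cosh d" "mink Y X = cosh d" "mink X X = 1" "mink Y Y = 1"
    using cosh_hyp_dist[OF X Y] X Y by (simp_all add: d_def mink_commute hyperboloid_def)
  have "cosh d * cosh d - sinh d * sinh d = 1"
    using hyperbolic_pythagoras[of d] by (simp add: power2_eq_square)
  with sh XY X show ?thesis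
    by (simp add: unit_tangent_def hyp_dir_def d_def[symmetric] mink_linear field_simps)
qed

lemma hyp_geod_hyp_dir:
  assumes "X \<in> hyperboloid" "Y \<in> hyperboloid"
  shows "hyp_geod X (hyp_dir X Y) (hyp_dist X Y) = Y"
proof (cases "X = Y")
  case True
  then show ?thesis using assms by (simp add: hyp_dist_self)
next
  case False
  then have "sinh (hyp_dist X Y) \<noteq> 0" using hyp_dist_pos[OF assms] by simp
  then show ?thesis by (simp add: hyp_geod_def hyp_dir_def)
qed

lemma hyp_dir_hyp_geod:
  assumes "unit_tangent X V" "s > 0"
  shows "hyp_dir X (hyp_geod X V s) = V"
proof -
  have "hyp_dist X (hyp_geod X V s) = s" using hyp_dist_hyp_geod[OF assms(1), of 0 s] assms(2) by simp
  then show ?thesis using assms(2) by (simp add: hyp_dir_def hyp_geod_def)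
qed

text \<open>Expand \<open>Y\<close> in the frame of the geodesic from \<open>X\<close> to \<open>Z\<close>: its component along the geodesic
  is at most \<open>sinh (hyp_dist X Y)\<close>, with equality only if \<open>Y\<close> lies on the geodesic.\<close>
lemma hyp_dist_triangle_geodesic:
  assumes X: "X \<in> hyperboloid" and Y: "Y \<in> hyperboloid" and Z: "Z \<in> hyperboloid" and ne: "X \<noteq> Z"
  shows "hyp_dist X Z \<le> hyp_dist X Y + hyp_dist Y Z"
    and "hyp_dist X Z = hyp_dist X Y + hyp_dist Y Z \<Longrightarrow> Y = hyp_geod X (hyp_dir X Z) (hyp_dist X Y)"
proof -
  define d a b where "d = hyp_dist X Z" and "a = hyp_dist X Y" and "b = hyp_dist Y Z"
  define V W where "V = hyp_dir X Z" and "W = mink_cross X V"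
  have u: "unit_tangent X V" using unit_tangent_hyp_dir[OF X Z ne] by (simp add: V_def)
  have Zd: "Z = hyp_geod X V d" using hyp_geod_hyp_dir[OF X Z] by (simp add: V_def d_def)
  have "sinh d > 0" using hyp_dist_pos[OF X Z ne] by (simp add: d_def)
  have "a \<ge> 0" "b \<ge> 0" using hyp_dist_nonneg X Y Z by (simp_all add: a_def b_def)
  define \<beta> \<gamma> where "\<beta> = - mink Y V" and "\<gamma> = - mink Y W"
  have ca: "mink Y X = cosh a" using cosh_hyp_dist[OF X Y] by (simp add: a_def mink_commute)
  have dec: "Y = cosh a *\<^sub>R X + \<beta> *\<^sub>R V + \<gamma> *\<^sub>R W"
    using unit_tangent_frame_decomp[OF u, of Y] by (simp add: ca \<beta>_def \<gamma>_def W_def algebra_simps)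
  have "mink Y Y = cosh a * mink Y X + \<beta> * mink Y V + \<gamma> * mink Y W"
    by (subst (2) dec) (simp add: mink_linear)
  then have sum: "(cosh a)\<^sup>2 - \<beta>\<^sup>2 - \<gamma>\<^sup>2 = 1"
    using Y ca by (simp add: hyperboloid_def \<beta>_def \<gamma>_def power2_eq_square)
  have pa: "(cosh a)\<^sup>2 - (sinh a)\<^sup>2 = 1" by (rule hyperbolic_pythagoras)
  have "\<beta>\<^sup>2 \<le> (sinh a)\<^sup>2" using sum pa zero_le_power2[of \<gamma>] by linarith
  moreover have "sinh a \<ge> 0" using \<open>a \<ge> 0\<close> by simp
  ultimately have \<beta>: "\<beta> \<le> sinh a" by (rule power2_le_imp_le)
  have "cosh b = mink Y Z" using cosh_hyp_dist[OF Y Z] by (simp add: b_def)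
  also have "\<dots> = cosh d * mink Y X + sinh d * mink Y V" by (simp add: Zd hyp_geod_def mink_linear)
  finally have cb: "cosh b = cosh d * cosh a - sinh d * \<beta>" by (simp add: ca \<beta>_def)
  have "cosh (d - a) = cosh d * cosh a - sinh d * sinh a" by (simp add: cosh_diff)
  also have "\<dots> \<le> cosh b" using cb \<beta> \<open>sinh d > 0\<close> by (simp add: mult_left_mono)
  finally have "cosh \<bar>d - a\<bar> \<le> cosh b" by simp
  then have "\<bar>d - a\<bar> \<le> b" using \<open>b \<ge> 0\<close> cosh_real_nonneg_le_iff[of "\<bar>d - a\<bar>" b] by linarith
  then show "hyp_dist X Z \<le> hyp_dist X Y + hyp_dist Y Z" by (simp add: a_def b_def d_def)
  assume "hyp_dist X Z = hyp_dist X Y + hyp_dist Y Z"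
  then have "b = d - a" by (simp add: a_def b_def d_def)
  then have "cosh b = cosh d * cosh a - sinh d * sinh a" by (simp add: cosh_diff)
  then have "\<beta> = sinh a" using cb \<open>sinh d > 0\<close> by simp
  then have "\<gamma>\<^sup>2 = 0" using sum pa by simp
  then have "\<gamma> = 0" by simp
  then show "Y = hyp_geod X (hyp_dir X Z) (hyp_dist X Y)"
    using dec \<open>\<beta> = sinh a\<close> by (simp add: hyp_geod_def V_def a_def)
qed

lemma hyp_dist_triangle:
  assumes "X \<in> hyperboloid" "Y \<in> hyperboloid" "Z \<in> hyperboloid"
  shows "hyp_dist X Z \<le> hyp_dist X Y + hyp_dist Y Z"
  using hyp_dist_triangle_geodesic(1)[OF assms] assms hyp_dist_self hyp_dist_nonneg
  by (cases "X = Z") (auto intro: add_nonneg_nonneg)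

section \<open>Geodesics of the product\<close>

definition HypR :: "(v3 \<times> real) set" where
  "HypR = hyperboloid \<times> UNIV"

definition hypr_dist :: "v3 \<times> real \<Rightarrow> v3 \<times> real \<Rightarrow> real" where
  "hypr_dist P Q = sqrt ((hyp_dist (fst P) (fst Q))\<^sup>2 + (snd P - snd Q)\<^sup>2)"

lemma hypr_dist_eq_norm: "hypr_dist P Q = norm (hyp_dist (fst P) (fst Q), snd P - snd Q)"
  by (simp add: hypr_dist_def norm_Pair)

lemma hypr_dist_self: "P \<in> HypR \<Longrightarrow> hypr_dist P P = 0"
  by (auto simp: hypr_dist_def HypR_def hyp_dist_self)

lemma hypr_dist_eq_0_iff:
  assumes "P \<in> HypR" "Q \<in> HypR"
  shows "hypr_dist P Q = 0 \<longleftrightarrow> P = Q"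
  using assms hyp_dist_eq_0_iff[of "fst P" "fst Q"]
  by (auto simp: hypr_dist_eq_norm HypR_def prod_eq_iff hypr_dist_self)

lemma hypr_dist_pos: "P \<in> HypR \<Longrightarrow> Q \<in> HypR \<Longrightarrow> P \<noteq> Q \<Longrightarrow> hypr_dist P Q > 0"
  using hypr_dist_eq_0_iff[of P Q] by (simp add: hypr_dist_def order_less_le)

text \<open>The unit-speed geodesics of the product: a geodesic of the hyperboloid traversed at speed
  \<open>a\<close>, paired with an affine function of slope \<open>b\<close>. For the vertical lines (\<open>a = 0\<close>) the
  tangent \<open>V\<close> is irrelevant.\<close>
definition prod_line :: "v3 \<Rightarrow> v3 \<Rightarrow> real \<Rightarrow> real \<Rightarrow> real \<Rightarrow> real \<Rightarrow> v3 \<times> real" where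
  "prod_line X V a b h t = (hyp_geod X V (a * t), b * t + h)"

definition prod_line_data :: "v3 \<Rightarrow> v3 \<Rightarrow> real \<Rightarrow> real \<Rightarrow> bool" where
  "prod_line_data X V a b \<longleftrightarrow> X \<in> hyperboloid \<and> a \<ge> 0 \<and> a\<^sup>2 + b\<^sup>2 = 1 \<and> (a \<noteq> 0 \<longrightarrow> unit_tangent X V)"

definition is_prod_line :: "(real \<Rightarrow> v3 \<times> real) \<Rightarrow> bool" where
  "is_prod_line l \<longleftrightarrow> (\<exists>X V a b h. prod_line_data X V a b \<and> l = prod_line X V a b h)"

lemma prod_line_data_hyp_geod:
  assumes "prod_line_data X V a b"
  shows "hyp_geod X V (a * t) \<in> hyperboloid"
    and "hyp_dist (hyp_geod X V (a * t)) (hyp_geod X V (a * u)) = a * \<bar>t - u\<bar>"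
proof -
  show "hyp_geod X V (a * t) \<in> hyperboloid"
    using assms by (cases "a = 0") (auto simp: prod_line_data_def hyp_geod_in_hyperboloid)
  show "hyp_dist (hyp_geod X V (a * t)) (hyp_geod X V (a * u)) = a * \<bar>t - u\<bar>"
    using assms by (cases "a = 0")
      (auto simp: prod_line_data_def hyp_dist_self hyp_dist_hyp_geod abs_mult
        simp flip: right_diff_distrib)
qed

lemma is_prod_line_in_HypR: "is_prod_line l \<Longrightarrow> l t \<in> HypR"
  by (auto simp: is_prod_line_def prod_line_def HypR_def prod_line_data_hyp_geod)

lemma is_prod_line_dist:
  assumes "is_prod_line l"
  shows "hypr_dist (l t) (l u) = \<bar>t - u\<bar>"
proof -
  obtain X V a b h where d: "prod_line_data X V a b" and l: "l = prod_line X V a b h"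
    using assms by (auto simp: is_prod_line_def)
  have "(a * \<bar>t - u\<bar>)\<^sup>2 + (b * t - b * u)\<^sup>2 = (a\<^sup>2 + b\<^sup>2) * (t - u)\<^sup>2"
    by (simp add: power2_eq_square algebra_simps)
  then show ?thesis
    using d prod_line_data_hyp_geod(2)[OF d, of t u]
    by (simp add: l hypr_dist_def prod_line_def prod_line_data_def)
qed

lemma is_prod_line_flat:
  assumes u: "unit_tangent X V" and ab: "\<alpha>\<^sup>2 + \<beta>\<^sup>2 = 1"
  shows "is_prod_line (\<lambda>t. (hyp_geod X V (\<sigma> + \<alpha> * t), \<tau> + \<beta> * t))"
proof -
  define X' V' where "X' = hyp_geod X V \<sigma>" and "V' = sinh \<sigma> *\<^sub>R X + cosh \<sigma> *\<^sub>R V"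
  have u': "unit_tangent X' V'" using unit_tangent_hyp_geod[OF u] by (simp add: X'_def V'_def)
  then have X': "X' \<in> hyperboloid" by (simp add: unit_tangent_def)
  have geod: "hyp_geod X V (\<sigma> + \<alpha> * t) = hyp_geod X' V' (\<alpha> * t)" for t
    using hyp_geod_add[of X V "\<alpha> * t" \<sigma>] by (simp add: X'_def V'_def add.commute)
  show ?thesis
  proof (cases "\<alpha> \<ge> 0")
    case True
    then have "prod_line_data X' V' \<alpha> \<beta>" using ab u' X' by (simp add: prod_line_data_def)
    moreover have "(\<lambda>t. (hyp_geod X V (\<sigma> + \<alpha> * t), \<tau> + \<beta> * t)) = prod_line X' V' \<alpha> \<beta> \<tau>"
      by (simp add: fun_eq_iff prod_line_def geod add.commute)
    ultimately show ?thesis unfolding is_prod_line_def by blast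
  next
    case False
    then have "prod_line_data X' (- V') (- \<alpha>) \<beta>"
      using ab unit_tangent_minus[OF u'] X' by (simp add: prod_line_data_def)
    moreover have "(\<lambda>t. (hyp_geod X V (\<sigma> + \<alpha> * t), \<tau> + \<beta> * t)) = prod_line X' (- V') (- \<alpha>) \<beta> \<tau>"
      by (simp add: fun_eq_iff prod_line_def geod add.commute hyp_geod_minus[symmetric])
    ultimately show ?thesis unfolding is_prod_line_def by blast
  qed
qed

lemma is_prod_line_vertical: "X \<in> hyperboloid \<Longrightarrow> is_prod_line (\<lambda>t. (X, t + h))"
  unfolding is_prod_line_def
  by (rule exI[of _ X], rule exI[of _ X], rule exI[of _ 0], rule exI[of _ 1], rule exI[of _ h])
    (simp add: prod_line_data_def prod_line_def fun_eq_iff)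

lemma is_prod_line_shift:
  assumes "is_prod_line l"
  shows "is_prod_line (\<lambda>t. l (t + c))"
proof -
  obtain X V a b h where d: "prod_line_data X V a b" and l: "l = prod_line X V a b h"
    using assms by (auto simp: is_prod_line_def)
  show ?thesis
  proof (cases "a = 0")
    case True
    then have "(\<lambda>t. l (t + c)) = prod_line X V a b (b * c + h)"
      by (simp add: fun_eq_iff l prod_line_def algebra_simps)
    then show ?thesis using d unfolding is_prod_line_def by blast
  next
    case False
    then have u: "unit_tangent X V" using d by (simp add: prod_line_data_def)
    have "(\<lambda>t. l (t + c)) = (\<lambda>t. (hyp_geod X V (a * c + a * t), b * c + h + b * t))"
      by (simp add: l prod_line_def algebra_simps)
    then show ?thesis using is_prod_line_flat[OF u] d by (simp add: prod_line_data_def)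
  qed
qed

lemma is_prod_line_reflect:
  assumes "is_prod_line l"
  shows "is_prod_line (\<lambda>t. l (- t))"
proof -
  obtain X V a b h where d: "prod_line_data X V a b" and l: "l = prod_line X V a b h"
    using assms by (auto simp: is_prod_line_def)
  then have "prod_line_data X (- V) a (- b)"
    by (auto simp: prod_line_data_def unit_tangent_minus)
  moreover have "(\<lambda>t. l (- t)) = prod_line X (- V) a (- b) h"
    by (auto simp: l prod_line_def hyp_geod_def)
  ultimately show ?thesis unfolding is_prod_line_def by blast
qed

lemma is_prod_line_eqI_0:
  assumes l1: "is_prod_line l1" and l2: "is_prod_line l2" and "e \<noteq> 0"
    and "l1 0 = l2 0" and "l1 e = l2 e"
  shows "l1 = l2"
proof -
  obtain X1 V1 a1 b1 h1 where d1: "prod_line_data X1 V1 a1 b1" and l1': "l1 = prod_line X1 V1 a1 b1 h1"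
    using l1 by (auto simp: is_prod_line_def)
  obtain X2 V2 a2 b2 h2 where d2: "prod_line_data X2 V2 a2 b2" and l2': "l2 = prod_line X2 V2 a2 b2 h2"
    using l2 by (auto simp: is_prod_line_def)
  have X: "X1 = X2" and h: "h1 = h2" using assms by (auto simp: l1' l2' prod_line_def)
  have b: "b1 = b2" using assms h by (auto simp: l1' l2' prod_line_def)
  have "a1\<^sup>2 = 1 - b1\<^sup>2" "a2\<^sup>2 = 1 - b2\<^sup>2" "a1 \<ge> 0" "a2 \<ge> 0"
    using d1 d2 by (simp_all add: prod_line_data_def algebra_simps)
  then have a: "a1 = a2" using b power2_eq_imp_eq[of a1 a2] by simp
  show ?thesis
  proof (cases "a1 = 0")
    case True
    then show ?thesis using X h b a by (auto simp: l1' l2' prod_line_def)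
  next
    case False
    then have "sinh (a1 * e) \<noteq> 0" using \<open>e \<noteq> 0\<close> by simp
    moreover have "hyp_geod X1 V1 (a1 * e) = hyp_geod X1 V2 (a1 * e)"
      using assms X a by (auto simp: l1' l2' prod_line_def)
    ultimately have "V1 = V2" by (simp add: hyp_geod_def)
    then show ?thesis using X h b a by (simp add: l1' l2')
  qed
qed

lemma is_prod_line_eqI:
  assumes l1: "is_prod_line l1" and l2: "is_prod_line l2" and "s \<noteq> t"
    and "l1 s = l2 s" and "l1 t = l2 t"
  shows "l1 = l2"
proof -
  have "(\<lambda>\<tau>. l1 (\<tau> + s)) = (\<lambda>\<tau>. l2 (\<tau> + s))"
    using assms by (intro is_prod_line_eqI_0[of _ _ "t - s"] is_prod_line_shift) auto
  then have "l1 (\<tau> - s + s) = l2 (\<tau> - s + s)" for \<tau> by meson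
  then show ?thesis by auto
qed

lemma norm_Pair_triangle_eq:
  fixes a1 a2 b1 b2 \<delta> :: real
  assumes "0 \<le> \<delta>" "\<delta> \<le> a1 + a2" and eq: "norm (a1, b1) + norm (a2, b2) = norm (\<delta>, b1 + b2)"
  shows "\<delta> = a1 + a2" and "norm (a1, b1) *\<^sub>R (a2, b2) = norm (a2, b2) *\<^sub>R (a1, b1)"
proof -
  have "norm (\<delta>, b1 + b2) \<le> norm (a1 + a2, b1 + b2)"
    using assms(1,2) by (simp add: norm_Pair power_mono)
  moreover have "norm (a1 + a2, b1 + b2) \<le> norm (a1, b1) + norm (a2, b2)"
    using norm_triangle_ineq[of "(a1, b1)" "(a2, b2)"] by simp
  ultimately have eq1: "norm (\<delta>, b1 + b2) = norm (a1 + a2, b1 + b2)"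
    and eq2: "norm ((a1, b1) + (a2, b2)) = norm (a1, b1) + norm (a2, b2)"
    using eq by simp_all
  from eq1 have "\<delta>\<^sup>2 = (a1 + a2)\<^sup>2" by (simp add: norm_Pair)
  then have "\<delta> = a1 + a2 \<or> \<delta> = - a1 - a2" by (simp add: power2_eq_iff)
  then show "\<delta> = a1 + a2" using assms(1,2) by linarith
  show "norm (a1, b1) *\<^sub>R (a2, b2) = norm (a2, b2) *\<^sub>R (a1, b1)"
    using eq2 by (simp only: norm_triangle_eq)
qed

definition unit_line :: "v3 \<times> real \<Rightarrow> v3 \<times> real \<Rightarrow> real \<Rightarrow> v3 \<times> real" where
  "unit_line P Q = prod_line (fst P) (hyp_dir (fst P) (fst Q))
     (hyp_dist (fst P) (fst Q) / hypr_dist P Q) ((snd Q - snd P) / hypr_dist P Q) (snd P)"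

lemma unit_line_apply:
  "unit_line P Q t = (hyp_geod (fst P) (hyp_dir (fst P) (fst Q))
     (hyp_dist (fst P) (fst Q) / hypr_dist P Q * t), (snd Q - snd P) / hypr_dist P Q * t + snd P)"
  by (simp add: unit_line_def prod_line_def)

lemma unit_line:
  assumes P: "P \<in> HypR" and Q: "Q \<in> HypR" and ne: "P \<noteq> Q"
  shows "is_prod_line (unit_line P Q)" and "unit_line P Q 0 = P"
    and "unit_line P Q (hypr_dist P Q) = Q"
proof -
  obtain X h Y k where PQ: "P = (X, h)" "Q = (Y, k)" by (cases P, cases Q) auto
  have X: "X \<in> hyperboloid" and Y: "Y \<in> hyperboloid" using P Q by (auto simp: PQ HypR_def)
  define D \<delta> where "D = hypr_dist P Q" and "\<delta> = hyp_dist X Y"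
  have "D > 0" using hypr_dist_pos[OF P Q ne] by (simp add: D_def)
  have "D\<^sup>2 = \<delta>\<^sup>2 + (k - h)\<^sup>2" by (simp add: D_def \<delta>_def PQ hypr_dist_def power2_commute)
  have "(\<delta> / D)\<^sup>2 + ((k - h) / D)\<^sup>2 = (\<delta>\<^sup>2 + (k - h)\<^sup>2) / D\<^sup>2"
    by (simp add: power_divide add_divide_distrib)
  also have "\<dots> = 1" using \<open>D\<^sup>2 = \<delta>\<^sup>2 + (k - h)\<^sup>2\<close>[symmetric] \<open>D > 0\<close> by simp
  finally have "(\<delta> / D)\<^sup>2 + ((k - h) / D)\<^sup>2 = 1" .
  moreover have "\<delta> \<ge> 0" using hyp_dist_nonneg[OF X Y] by (simp add: \<delta>_def)
  moreover have "\<delta> / D \<noteq> 0 \<longrightarrow> unit_tangent X (hyp_dir X Y)"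
    using unit_tangent_hyp_dir[OF X Y] hyp_dist_self[OF X] by (auto simp: \<delta>_def)
  ultimately have "prod_line_data X (hyp_dir X Y) (\<delta> / D) ((k - h) / D)"
    using X \<open>D > 0\<close> by (simp add: prod_line_data_def)
  moreover have "unit_line P Q = prod_line X (hyp_dir X Y) (\<delta> / D) ((k - h) / D) h"
    by (simp add: unit_line_def PQ D_def \<delta>_def)
  ultimately show "is_prod_line (unit_line P Q)" unfolding is_prod_line_def by blast
  show "unit_line P Q 0 = P" by (simp add: unit_line_def prod_line_def PQ)
  have "unit_line P Q D = (hyp_geod X (hyp_dir X Y) (\<delta> / D * D), (k - h) / D * D + h)"
    by (simp add: unit_line_apply PQ D_def \<delta>_def)
  also have "\<dots> = Q" using \<open>D > 0\<close> hyp_geod_hyp_dir[OF X Y] by (simp add: PQ \<delta>_def)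
  finally show "unit_line P Q (hypr_dist P Q) = Q" by (simp add: D_def)
qed

text \<open>In the equality case the horizontal components are collinear by
  \<open>hyp_dist_triangle_geodesic\<close>, and the horizontal and vertical displacements are proportional
  by \<open>norm_Pair_triangle_eq\<close>.\<close>
lemma hypr_dist_eq_sum_imp_unit_line:
  assumes P: "P \<in> HypR" and Q: "Q \<in> HypR" and M: "M \<in> HypR" and ne: "P \<noteq> Q"
    and eq: "hypr_dist P M + hypr_dist M Q = hypr_dist P Q"
  shows "M = unit_line P Q (hypr_dist P M)"
proof -
  obtain X h Y k Z m where PQM: "P = (X, h)" "Q = (Y, k)" "M = (Z, m)"
    by (cases P, cases Q, cases M) auto
  have X: "X \<in> hyperboloid" and Y: "Y \<in> hyperboloid" and Z: "Z \<in> hyperboloid"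
    using P Q M by (auto simp: PQM HypR_def)
  define a1 a2 \<delta> where "a1 = hyp_dist X Z" and "a2 = hyp_dist Z Y" and "\<delta> = hyp_dist X Y"
  define r1 r2 D where "r1 = hypr_dist P M" and "r2 = hypr_dist M Q" and "D = hypr_dist P Q"
  have r: "r1 = norm (a1, m - h)" "r2 = norm (a2, k - m)" "D = norm (\<delta>, (m - h) + (k - m))"
    by (simp_all add: r1_def r2_def D_def a1_def a2_def \<delta>_def PQM hypr_dist_eq_norm norm_Pair
        power2_commute)
  have "0 \<le> \<delta>" "\<delta> \<le> a1 + a2"
    using hyp_dist_nonneg[OF X Y] hyp_dist_triangle[OF X Z Y] by (simp_all add: a1_def a2_def \<delta>_def)
  note mk = norm_Pair_triangle_eq[OF this eq[folded r1_def r2_def D_def, unfolded r]]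
  have "D > 0" using hypr_dist_pos[OF P Q ne] by (simp add: D_def)
  have D: "D = r1 + r2" using eq by (simp add: r1_def r2_def D_def)
  have "r1 * a2 = r2 * a1" "r1 * (k - m) = r2 * (m - h)" using mk(2) by (simp_all flip: r)
  then have e1: "\<delta> / D * r1 = a1" and e2: "(k - h) / D * r1 = m - h"
    using \<open>D > 0\<close> mk(1) by (simp_all add: D field_simps)
  have "Z = hyp_geod X (hyp_dir X Y) a1"
  proof (cases "X = Y")
    case True
    then have "a1 = 0" using mk(1) hyp_dist_self[OF X] hyp_dist_nonneg[OF X Z] hyp_dist_nonneg[OF Z Y]
      by (simp add: a1_def a2_def \<delta>_def)
    then show ?thesis using hyp_dist_eq_0_iff[OF X Z] by (simp add: a1_def)
  next
    case False
    then show ?thesis using hyp_dist_triangle_geodesic(2)[OF X Z Y False] mk(1)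
      by (simp add: a1_def a2_def \<delta>_def)
  qed
  moreover have "unit_line P Q r1 = (hyp_geod X (hyp_dir X Y) (\<delta> / D * r1), (k - h) / D * r1 + h)"
    by (simp add: unit_line_apply PQM \<delta>_def D_def)
  ultimately show ?thesis using e1 e2 by (simp add: PQM r1_def)
qed

definition line_through :: "v3 \<times> real \<Rightarrow> v3 \<times> real \<Rightarrow> (v3 \<times> real) set" where
  "line_through P Q = range (unit_line P Q)"

lemma line_through:
  assumes "P \<in> HypR" "Q \<in> HypR" "P \<noteq> Q"
  shows "P \<in> line_through P Q" "Q \<in> line_through P Q" "line_through P Q \<subseteq> HypR"
  using unit_line[OF assms] is_prod_line_in_HypR unfolding line_through_def
  by (metis rangeI, metis rangeI, blast)

lemma range_prod_line_eq_line_through: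
  assumes l: "is_prod_line l" and "l t1 = P" "l t2 = Q" and ne: "P \<noteq> Q"
  shows "range l = line_through P Q"
proof -
  have P: "P \<in> HypR" and Q: "Q \<in> HypR" using is_prod_line_in_HypR[OF l] assms(2,3) by auto
  define D where "D = hypr_dist P Q"
  have "D > 0" using hypr_dist_pos[OF P Q ne] by (simp add: D_def)
  have D: "D = \<bar>t2 - t1\<bar>" using is_prod_line_dist[OF l, of t1 t2] assms(2,3) by (simp add: D_def abs_minus_commute)
  define \<sigma> where "\<sigma> = sgn (t2 - t1)"
  have \<sigma>: "\<sigma> * \<sigma> = 1" "\<sigma> * D = t2 - t1" using \<open>D > 0\<close> by (auto simp: \<sigma>_def D sgn_if)
  define m where "m = l \<circ> (\<lambda>\<tau>. t1 + \<sigma> * \<tau>)"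
  have "is_prod_line m"
  proof (cases "\<sigma> = 1")
    case True
    then have "m = (\<lambda>\<tau>. l (\<tau> + t1))" by (simp add: m_def fun_eq_iff add.commute)
    then show ?thesis using is_prod_line_shift[OF l] by simp
  next
    case False
    then have "\<sigma> = -1" using \<sigma>(1) by (metis mult_cancel_left1 mult_minus1_right square_eq_1_iff)
    then have "m = (\<lambda>\<tau>. l (- \<tau> + t1))" by (simp add: m_def fun_eq_iff add.commute)
    then show ?thesis using is_prod_line_reflect[OF is_prod_line_shift[OF l, of t1]] by simp
  qed
  have m0: "m 0 = P" and mD: "m D = Q" using assms(2,3) \<sigma> by (simp_all add: m_def)
  define M where "M = m (D / 2)"
  have "M \<in> HypR" using is_prod_line_in_HypR[OF \<open>is_prod_line m\<close>] by (simp add: M_def)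
  moreover have PM: "hypr_dist P M = D / 2" and MQ: "hypr_dist M Q = D / 2"
    using is_prod_line_dist[OF \<open>is_prod_line m\<close>, of 0 "D / 2"]
      is_prod_line_dist[OF \<open>is_prod_line m\<close>, of "D / 2" D] m0 mD \<open>D > 0\<close>
    by (simp_all add: M_def)
  ultimately have "M = unit_line P Q (hypr_dist P M)"
    using hypr_dist_eq_sum_imp_unit_line[OF P Q _ ne] by (simp add: D_def)
  then have "m (D / 2) = unit_line P Q (D / 2)" unfolding PM by (simp add: M_def)
  then have "m = unit_line P Q"
    using is_prod_line_eqI[OF \<open>is_prod_line m\<close> unit_line(1)[OF P Q ne], of 0 "D / 2"]
      unit_line(2)[OF P Q ne] m0 \<open>D > 0\<close> by simp
  moreover have "surj (\<lambda>\<tau>. t1 + \<sigma> * \<tau>)"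
    by (rule surjI[where f = "\<lambda>t. \<sigma> * (t - t1)"]) (simp add: mult.assoc[symmetric] \<sigma>(1))
  then have "range m = range l" by (metis m_def image_comp)
  ultimately show ?thesis by (simp add: line_through_def)
qed

lemma local_isometry_near_prod_line:
  assumes c: "local_isometry_line hypr_dist HypR c"
  shows "\<exists>l. is_prod_line l \<and> (\<exists>e>0. \<forall>s. \<bar>s - t\<bar> < e \<longrightarrow> c s = l s)"
proof -
  have cin: "\<And>t. c t \<in> HypR" using c by (simp add: local_isometry_line_def)
  obtain e where "e > 0"
    and iso: "\<And>s u. \<bar>s - t\<bar> < e \<Longrightarrow> \<bar>u - t\<bar> < e \<Longrightarrow> hypr_dist (c s) (c u) = \<bar>s - u\<bar>"
    using c unfolding local_isometry_line_def by blast
  define s0 P Q where "s0 = t - e / 2" and "P = c s0" and "Q = c (t + e / 2)"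
  have PQ: "hypr_dist P Q = e" using iso[of s0 "t + e / 2"] \<open>e > 0\<close> by (simp add: s0_def P_def Q_def)
  have ne: "P \<noteq> Q" using PQ \<open>e > 0\<close> hypr_dist_self[OF cin[of s0]] by (auto simp: P_def)
  have P: "P \<in> HypR" and Q: "Q \<in> HypR" using cin by (simp_all add: P_def Q_def)
  define l where "l = (\<lambda>\<tau>. unit_line P Q (\<tau> - s0))"
  have "is_prod_line l"
    using is_prod_line_shift[OF unit_line(1)[OF P Q ne], of "- s0"] by (simp add: l_def)
  moreover have "c s = l s" if s: "\<bar>s - t\<bar> < e / 2" for s
  proof -
    have "hypr_dist P (c s) = s - s0" "hypr_dist (c s) Q = t + e / 2 - s"
      using iso[of s0 s] iso[of s "t + e / 2"] s \<open>e > 0\<close> by (simp_all add: s0_def P_def Q_def)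
    then show ?thesis
      using hypr_dist_eq_sum_imp_unit_line[OF P Q cin[of s] ne] PQ by (simp add: l_def s0_def)
  qed
  ultimately show ?thesis using \<open>e > 0\<close> by (intro exI[of _ l] conjI exI[of _ "e / 2"]) auto
qed

text \<open>A local isometry agrees near each time with a line; these lines agree on overlapping
  intervals, hence coincide, and by connectedness of the real line they are all the same.\<close>
lemma local_isometry_is_prod_line:
  assumes c: "local_isometry_line hypr_dist HypR c"
  shows "is_prod_line c"
proof -
  define L where "L t = (SOME l. is_prod_line l \<and> (\<exists>e>0. \<forall>s. \<bar>s - t\<bar> < e \<longrightarrow> c s = l s))" for t
  have L: "is_prod_line (L t) \<and> (\<exists>e>0. \<forall>s. \<bar>s - t\<bar> < e \<longrightarrow> c s = L t s)" for t
    unfolding L_def by (rule someI_ex[OF local_isometry_near_prod_line[OF c]])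
  have "L 0 = L t" for t
  proof (rule connected_local_const[OF connected_UNIV], safe)
    fix a :: real
    obtain e where "e > 0" and e: "\<And>s. \<bar>s - a\<bar> < e \<Longrightarrow> c s = L a s" using L by blast
    have "L a = L x" if x: "\<bar>x - a\<bar> < e" for x
    proof -
      obtain e' where "e' > 0" and e': "\<And>s. \<bar>s - x\<bar> < e' \<Longrightarrow> c s = L x s" using L by blast
      define r where "r = min e' (e - \<bar>x - a\<bar>)"
      have "r > 0" using \<open>e' > 0\<close> x by (simp add: r_def)
      have "L a s = L x s" if "\<bar>s - x\<bar> < r" for s
      proof -
        have "\<bar>s - a\<bar> < e" "\<bar>s - x\<bar> < e'"
          using that abs_triangle_ineq[of "s - x" "x - a"] by (simp_all add: r_def)
        then show ?thesis using e e' by metis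
      qed
      then show ?thesis
        using is_prod_line_eqI[of "L a" "L x" x "x + r / 2"] L \<open>r > 0\<close> by simp
    qed
    then show "\<forall>\<^sub>F b in at a within UNIV. L a = L b"
      using \<open>e > 0\<close> by (auto simp: eventually_at dist_real_def)
  qed auto
  moreover have "c t = L t t" for t using L by force
  ultimately have "c t = L 0 t" for t by metis
  then have "c = L 0" ..
  then show ?thesis using L by simp
qed

lemma is_geodesic_HypR_iff:
  "is_geodesic hypr_dist HypR G \<longleftrightarrow> (\<exists>l. is_prod_line l \<and> G = range l)"
proof
  show "is_geodesic hypr_dist HypR G \<Longrightarrow> \<exists>l. is_prod_line l \<and> G = range l"
    using local_isometry_is_prod_line by (auto simp: is_geodesic_def)
  show "\<exists>l. is_prod_line l \<and> G = range l \<Longrightarrow> is_geodesic hypr_dist HypR G"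
    unfolding is_geodesic_def local_isometry_line_def
    by (metis is_prod_line_in_HypR is_prod_line_dist zero_less_one)
qed

lemma is_geodesic_line_through:
  "P \<in> HypR \<Longrightarrow> Q \<in> HypR \<Longrightarrow> P \<noteq> Q \<Longrightarrow> is_geodesic hypr_dist HypR (line_through P Q)"
  unfolding is_geodesic_HypR_iff line_through_def using unit_line(1) by blast

lemma totally_geodesic_line_through:
  assumes X: "totally_geodesic hypr_dist HypR X" and "P \<in> X" "Q \<in> X" "P \<noteq> Q"
  shows "line_through P Q \<subseteq> X"
proof -
  obtain G where "is_geodesic hypr_dist HypR G" "G \<subseteq> X" "P \<in> G" "Q \<in> G"
    using X assms unfolding totally_geodesic_def by blast
  then obtain l t1 t2 where "is_prod_line l" "G = range l" "l t1 = P" "l t2 = Q"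
    by (auto simp: is_geodesic_HypR_iff)
  then show ?thesis
    using range_prod_line_eq_line_through[of l t1 P t2 Q] \<open>P \<noteq> Q\<close> \<open>G \<subseteq> X\<close> by simp
qed

lemma scaleR_add_eq_0_imp_0:
  fixes u w :: "'a::real_vector"
  assumes "u \<noteq> 0" "w \<notin> span {u}" "\<alpha> *\<^sub>R u + \<beta> *\<^sub>R w = 0"
  shows "\<alpha> = 0 \<and> \<beta> = 0"
proof (cases "\<beta> = 0")
  case True
  then show ?thesis using assms by simp
next
  case False
  have "\<beta> *\<^sub>R w = - (\<alpha> *\<^sub>R u)" using assms(3) by (simp add: eq_neg_iff_add_eq_0 add.commute)
  have "w = (1 / \<beta>) *\<^sub>R (\<beta> *\<^sub>R w)" using False by simp
  also have "\<dots> = (- \<alpha> / \<beta>) *\<^sub>R u" using \<open>\<beta> *\<^sub>R w = - (\<alpha> *\<^sub>R u)\<close> by simp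
  finally show ?thesis using assms(2) span_mul[OF span_base[of u "{u}"], of "- \<alpha> / \<beta>"] by simp
qed

lemma span_pair_eq_UNIV:
  fixes u w :: "'a::euclidean_space"
  assumes "DIM('a) = 2" "u \<noteq> 0" "w \<notin> span {u}"
  shows "\<exists>\<alpha> \<beta>. x = \<alpha> *\<^sub>R u + \<beta> *\<^sub>R w"
proof -
  have "independent {w, u}"
    using assms(2,3) span_base[of u "{u}"] by (auto simp: independent_insert)
  then have "independent {u, w}" by (metis insert_commute)
  moreover have "u \<noteq> w" using assms(3) span_base[of u "{u}"] by auto
  ultimately have "span {u, w} = UNIV"
    using card_ge_dim_independent[of "{u, w}" UNIV] assms(1) by (auto simp: dim_UNIV)
  then show ?thesis by (auto simp: span_insert span_singleton set_eq_iff algebra_simps)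
qed

section \<open>Sets closed under geodesics\<close>

lemma open_small_steps:
  fixes a v w :: "'a::real_normed_vector"
  assumes "open D" "a \<in> D"
  obtains l :: real where "0 < l" "l < 1" "a + l *\<^sub>R v \<in> D" "a + l *\<^sub>R w \<in> D"
proof -
  have "\<forall>\<^sub>F l in at_right 0. a + l *\<^sub>R v \<in> D" "\<forall>\<^sub>F l in at_right 0. a + l *\<^sub>R w \<in> D"
    by (rule topological_tendstoD[OF _ assms], (rule tendsto_eq_intros refl)+, simp)+
  moreover have "\<forall>\<^sub>F l in at_right 0. l \<in> {0<..<1::real}" by (rule eventually_at_right_real) simp
  ultimately have "\<forall>\<^sub>F l in at_right 0. (a + l *\<^sub>R v \<in> D \<and> a + l *\<^sub>R w \<in> D) \<and> l \<in> {0<..<1}"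
    by (intro eventually_conj)
  then have "\<exists>l. (a + l *\<^sub>R v \<in> D \<and> a + l *\<^sub>R w \<in> D) \<and> l \<in> {0<..<1}"
    using eventually_happens trivial_limit_at_right_real by blast
  then show thesis using that by auto
qed

lemma affine_hull_2_span: "c \<in> affine hull {a, b} \<longleftrightarrow> c - a \<in> span {b - a}"
proof -
  have "c \<in> affine hull {a, b} \<longleftrightarrow> (\<exists>t. c = a + t *\<^sub>R (b - a))"
    by (simp add: affine_hull_2_alt image_iff)
  also have "\<dots> \<longleftrightarrow> (\<exists>t. c - a = t *\<^sub>R (b - a))" by (metis add.commute diff_eq_eq)
  also have "\<dots> \<longleftrightarrow> c - a \<in> span {b - a}" by (simp add: span_singleton image_iff)
  finally show ?thesis .
qed

text \<open>For \<open>p \<in> D\<close> write \<open>p - a = \<alpha> (b - a) + \<beta> (c - a)\<close>; for small \<open>l > 0\<close> the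
  points \<open>a + 2 l \<alpha> (b - a)\<close> and \<open>a + 2 l \<beta> (c - a)\<close> lie on the chords through \<open>a, b\<close> and
  \<open>a, c\<close>, their midpoint \<open>a + l (p - a)\<close> lies on the chord joining them, and \<open>p\<close> lies on the
  chord through \<open>a\<close> and this midpoint.\<close>
lemma chord_closed_eq_convex_open:
  fixes K D :: "'a::euclidean_space set"
  assumes "DIM('a) = 2" "convex D" "open D" "K \<subseteq> D"
    and closed: "\<And>x y. x \<in> K \<Longrightarrow> y \<in> K \<Longrightarrow> x \<noteq> y \<Longrightarrow> affine hull {x, y} \<inter> D \<subseteq> K"
    and a: "a \<in> K" and b: "b \<in> K" and c: "c \<in> K" and "a \<noteq> b" and abc: "c \<notin> affine hull {a, b}"
  shows "K = D"
proof
  show "D \<subseteq> K"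
  proof
    fix p assume p: "p \<in> D"
    define u w where "u = b - a" and "w = c - a"
    have "u \<noteq> 0" using \<open>a \<noteq> b\<close> by (simp add: u_def)
    have w: "w \<notin> span {u}" using abc by (simp add: affine_hull_2_span u_def w_def)
    have "a \<noteq> c" using abc hull_inc[of a "{a, b}"] by auto
    obtain \<alpha> \<beta> where pa: "p - a = \<alpha> *\<^sub>R u + \<beta> *\<^sub>R w"
      using span_pair_eq_UNIV[OF assms(1) \<open>u \<noteq> 0\<close> w] by blast
    show "p \<in> K"
    proof (cases "p = a")
      case True
      then show ?thesis using a by simp
    next
      case False
      have "a \<in> D" using a assms(4) by blast
      obtain l where l: "0 < l" "l < 1"
        and x: "a + l *\<^sub>R ((2 * \<alpha>) *\<^sub>R u) \<in> D" and y: "a + l *\<^sub>R ((2 * \<beta>) *\<^sub>R w) \<in> D"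
        using open_small_steps[OF \<open>open D\<close> \<open>a \<in> D\<close>] by blast
      define x y where "x = a + l *\<^sub>R ((2 * \<alpha>) *\<^sub>R u)" and "y = a + l *\<^sub>R ((2 * \<beta>) *\<^sub>R w)"
      have "x \<in> K" using closed[OF a b \<open>a \<noteq> b\<close>] x by (auto simp: x_def u_def affine_hull_2_alt)
      moreover have "y \<in> K" using closed[OF a c \<open>a \<noteq> c\<close>] y by (auto simp: y_def w_def affine_hull_2_alt)
      moreover have "x \<noteq> y"
      proof
        assume "x = y"
        then have "(2 * l * \<alpha>) *\<^sub>R u + (- 2 * l * \<beta>) *\<^sub>R w = 0" by (simp add: x_def y_def algebra_simps)
        then have "\<alpha> = 0 \<and> \<beta> = 0"
          using scaleR_add_eq_0_imp_0[OF \<open>u \<noteq> 0\<close> w, of "2 * l * \<alpha>" "- 2 * l * \<beta>"] l by simp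
        then show False using pa \<open>p \<noteq> a\<close> by simp
      qed
      moreover define q where "q = a + l *\<^sub>R (p - a)"
      have "q = x + (1 / 2) *\<^sub>R (y - x)"
        unfolding q_def x_def y_def pa by (simp add: algebra_simps flip: scaleR_add_left)
      moreover have "q \<in> D"
        using convexD[OF \<open>convex D\<close> \<open>a \<in> D\<close> p, of "1 - l" l] l by (simp add: q_def algebra_simps)
      ultimately have "q \<in> K" using closed[of x y] by (auto simp: affine_hull_2_alt)
      moreover have "a \<noteq> q" using \<open>p \<noteq> a\<close> l by (simp add: q_def)
      moreover have "p = a + (1 / l) *\<^sub>R (q - a)" using l by (simp add: q_def)
      ultimately show "p \<in> K" using closed[OF a, of q] p by (auto simp: affine_hull_2_alt)
    qed
  qed
qed (rule assms(4))

text \<open>The flat through \<open>X\<close> spanned by the direction \<open>V\<close> and the vertical, parametrised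
  isometrically by the plane.\<close>
definition flat_map :: "v3 \<Rightarrow> v3 \<Rightarrow> real \<times> real \<Rightarrow> v3 \<times> real" where
  "flat_map X V p = (hyp_geod X V (fst p), snd p)"

lemma range_Pair_const: "range (\<lambda>t. (f t, c)) = range f \<times> {c}"
  by (auto simp: image_iff)

lemma inj_flat_map:
  assumes "unit_tangent X V"
  shows "inj (flat_map X V)"
proof (rule injI)
  fix p q assume "flat_map X V p = flat_map X V q"
  then have "hyp_geod X V (fst p) = hyp_geod X V (fst q)" "snd p = snd q"
    by (simp_all add: flat_map_def)
  then show "p = q" using hyp_geod_inj[OF assms, of "fst p" "fst q"] by (simp add: prod_eq_iff)
qed

lemma line_through_flat_map:
  assumes u: "unit_tangent X V" and "p \<noteq> q"
  shows "line_through (flat_map X V p) (flat_map X V q) = flat_map X V ` (affine hull {p, q})"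
proof -
  define L where "L = norm (q - p)"
  have "L > 0" using \<open>p \<noteq> q\<close> by (simp add: L_def)
  define \<alpha> \<beta> where "\<alpha> = (fst q - fst p) / L" and "\<beta> = (snd q - snd p) / L"
  have L2: "(fst q - fst p)\<^sup>2 + (snd q - snd p)\<^sup>2 = L\<^sup>2"
    unfolding L_def by (cases p, cases q) (simp add: norm_Pair)
  have "\<alpha>\<^sup>2 + \<beta>\<^sup>2 = ((fst q - fst p)\<^sup>2 + (snd q - snd p)\<^sup>2) / L\<^sup>2"
    by (simp add: \<alpha>_def \<beta>_def power_divide add_divide_distrib)
  then have "\<alpha>\<^sup>2 + \<beta>\<^sup>2 = 1" using \<open>L > 0\<close> by (simp only: L2) simp
  define l where "l = (\<lambda>t. (hyp_geod X V (fst p + \<alpha> * t), snd p + \<beta> * t))"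
  have l: "l t = flat_map X V (p + (t / L) *\<^sub>R (q - p))" for t
    by (simp add: l_def flat_map_def \<alpha>_def \<beta>_def ac_simps)
  have "range l = line_through (flat_map X V p) (flat_map X V q)"
  proof (rule range_prod_line_eq_line_through)
    show "is_prod_line l" unfolding l_def by (rule is_prod_line_flat[OF u \<open>\<alpha>\<^sup>2 + \<beta>\<^sup>2 = 1\<close>])
    show "l 0 = flat_map X V p" "l L = flat_map X V q" using \<open>L > 0\<close> by (simp_all add: l)
    show "flat_map X V p \<noteq> flat_map X V q" using \<open>p \<noteq> q\<close> by (simp add: inj_eq[OF inj_flat_map[OF u]])
  qed
  moreover have "l = flat_map X V \<circ> (\<lambda>s. p + s *\<^sub>R (q - p)) \<circ> (\<lambda>t. t / L)"
    by (simp add: fun_eq_iff l)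
  moreover have "range (\<lambda>t. t / L) = UNIV"
    using \<open>L > 0\<close> by (intro surjI[where f = "\<lambda>s. s * L"]) simp
  ultimately have "line_through (flat_map X V p) (flat_map X V q) = flat_map X V ` range (\<lambda>s. p + s *\<^sub>R (q - p))"
    by (simp only: image_comp[symmetric])
  then show ?thesis by (simp add: affine_hull_2_alt)
qed

lemma totally_geodesic_flat:
  assumes X': "totally_geodesic hypr_dist HypR X'" and u: "unit_tangent X V"
    and in_X': "flat_map X V p \<in> X'" "flat_map X V q \<in> X'" "flat_map X V r \<in> X'"
    and "p \<noteq> q" and "r \<notin> affine hull {p, q}"
  shows "flat_map X V z \<in> X'"
proof -
  have "flat_map X V -` X' = UNIV"
  proof (rule chord_closed_eq_convex_open)
    fix x y assume "x \<in> flat_map X V -` X'" "y \<in> flat_map X V -` X'" "x \<noteq> y"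
    then have "line_through (flat_map X V x) (flat_map X V y) \<subseteq> X'"
      by (intro totally_geodesic_line_through[OF X']) (simp_all add: inj_eq[OF inj_flat_map[OF u]])
    then show "affine hull {x, y} \<inter> UNIV \<subseteq> flat_map X V -` X'"
      unfolding line_through_flat_map[OF u \<open>x \<noteq> y\<close>] by blast
  qed (use in_X' \<open>p \<noteq> q\<close> \<open>r \<notin> affine hull {p, q}\<close> in simp_all)
  then show ?thesis by blast
qed

definition hyp_line :: "v3 \<Rightarrow> v3 \<Rightarrow> v3 set" where
  "hyp_line P Q = range (hyp_geod P (hyp_dir P Q))"

definition hyp_normal :: "v3 \<Rightarrow> v3 \<Rightarrow> v3" where
  "hyp_normal P Q = mink_cross P (hyp_dir P Q)"

lemma hyp_line:
  assumes "P \<in> hyperboloid" "Q \<in> hyperboloid"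
  shows "P \<in> hyp_line P Q" "Q \<in> hyp_line P Q"
  unfolding hyp_line_def
  using rangeI[of "hyp_geod P (hyp_dir P Q)" 0] rangeI[of "hyp_geod P (hyp_dir P Q)" "hyp_dist P Q"]
  by (simp_all add: hyp_geod_hyp_dir[OF assms])

lemma hyp_line_subset:
  "P \<in> hyperboloid \<Longrightarrow> Q \<in> hyperboloid \<Longrightarrow> P \<noteq> Q \<Longrightarrow> hyp_line P Q \<subseteq> hyperboloid"
  unfolding hyp_line_def using hyp_geod_in_hyperboloid[OF unit_tangent_hyp_dir] by blast

lemma is_geodesic_hyp_line:
  assumes "P \<in> hyperboloid" "Q \<in> hyperboloid" "P \<noteq> Q"
  shows "is_geodesic hyp_dist hyperboloid (hyp_line P Q)"
  unfolding is_geodesic_def local_isometry_line_def hyp_line_def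
proof (intro exI[of _ "hyp_geod P (hyp_dir P Q)"] conjI allI)
  note u = unit_tangent_hyp_dir[OF assms]
  fix t
  show "hyp_geod P (hyp_dir P Q) t \<in> hyperboloid" by (rule hyp_geod_in_hyperboloid[OF u])
  show "\<exists>e>0. \<forall>s u. \<bar>s - t\<bar> < e \<longrightarrow> \<bar>u - t\<bar> < e \<longrightarrow>
      hyp_dist (hyp_geod P (hyp_dir P Q) s) (hyp_geod P (hyp_dir P Q) u) = \<bar>s - u\<bar>"
    by (intro exI[of _ 1]) (simp add: hyp_dist_hyp_geod[OF u])
qed simp

lemma line_through_vertical:
  assumes "X \<in> hyperboloid" "h \<noteq> k"
  shows "line_through (X, h) (X, k) = {X} \<times> UNIV"
proof -
  have "range (\<lambda>t. (X, t + h)) = line_through (X, h) (X, k)"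
    using assms by (intro range_prod_line_eq_line_through[of _ 0 _ "k - h"] is_prod_line_vertical) simp_all
  moreover have "range (\<lambda>t. (X, t + h)) = {X} \<times> UNIV"
  proof (intro subset_antisym subsetI)
    fix z :: "v3 \<times> real" assume "z \<in> {X} \<times> UNIV"
    then have "z = (X, (snd z - h) + h)" by (simp add: mem_Times_iff prod_eq_iff)
    then show "z \<in> range (\<lambda>t. (X, t + h))" by (rule image_eqI) simp
  qed blast
  ultimately show ?thesis by simp
qed

lemma line_through_horizontal:
  assumes P: "P \<in> hyperboloid" and Q: "Q \<in> hyperboloid" and "P \<noteq> Q"
  shows "line_through (P, r) (Q, r) = hyp_line P Q \<times> {r}"
proof -
  have "is_prod_line (\<lambda>t. (hyp_geod P (hyp_dir P Q) (0 + 1 * t), r + 0 * t))"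
    by (rule is_prod_line_flat[OF unit_tangent_hyp_dir[OF assms]]) simp
  then have "range (\<lambda>t. (hyp_geod P (hyp_dir P Q) t, r)) = line_through (P, r) (Q, r)"
    using hyp_geod_hyp_dir[OF P Q] \<open>P \<noteq> Q\<close>
    by (intro range_prod_line_eq_line_through[of _ 0 _ "hyp_dist P Q"]) simp_all
  then show ?thesis by (simp add: hyp_line_def range_Pair_const)
qed

lemma range_hyp_geod_eq_hyp_line:
  assumes u: "unit_tangent X V" and ne: "hyp_geod X V s1 \<noteq> hyp_geod X V s2"
  shows "range (hyp_geod X V) = hyp_line (hyp_geod X V s1) (hyp_geod X V s2)"
proof -
  have "is_prod_line (\<lambda>t. (hyp_geod X V (0 + 1 * t), 0 + 0 * t))"
    by (rule is_prod_line_flat[OF u]) simp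
  then have "range (\<lambda>t. (hyp_geod X V t, 0)) = line_through (hyp_geod X V s1, 0) (hyp_geod X V s2, 0)"
    using ne by (intro range_prod_line_eq_line_through[of _ s1 _ s2]) simp_all
  also have "\<dots> = hyp_line (hyp_geod X V s1) (hyp_geod X V s2) \<times> {0}"
    using hyp_geod_in_hyperboloid[OF u] ne by (intro line_through_horizontal) simp_all
  finally show ?thesis by (simp add: range_Pair_const Times_eq_cancel2)
qed

lemma hyp_line_eq_hyp_line:
  assumes "P \<in> hyperboloid" "Q \<in> hyperboloid" "P \<noteq> Q"
    and "Z1 \<in> hyp_line P Q" "Z2 \<in> hyp_line P Q" "Z1 \<noteq> Z2"
  shows "hyp_line Z1 Z2 = hyp_line P Q"
proof -
  obtain s1 s2 where "Z1 = hyp_geod P (hyp_dir P Q) s1" "Z2 = hyp_geod P (hyp_dir P Q) s2"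
    using assms(4,5) unfolding hyp_line_def by blast
  then show ?thesis
    using range_hyp_geod_eq_hyp_line[OF unit_tangent_hyp_dir[OF assms(1-3)], of s1 s2] assms(6)
    by (simp add: hyp_line_def[of P Q])
qed

lemma hyp_line_through_point:
  assumes AB: "A \<in> hyperboloid" "B \<in> hyperboloid" "A \<noteq> B" and X: "X \<in> hyp_line A B"
  obtains D where "unit_tangent X D" "hyp_line A B = range (hyp_geod X D)"
proof -
  obtain X' where X': "X' \<in> {A, B}" "X \<noteq> X'" using AB(3) by blast
  then have "X' \<in> hyperboloid" "X' \<in> hyp_line A B" using AB hyp_line[OF AB(1,2)] by blast+
  moreover have "X \<in> hyperboloid" using X hyp_line_subset[OF AB] by blast
  ultimately show thesis
    using that[of "hyp_dir X X'"] unit_tangent_hyp_dir hyp_line_eq_hyp_line[OF AB X _ X'(2)]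
    by (simp add: hyp_line_def[of X X'] X'(2))
qed

lemma fst_line_through:
  assumes W1: "W1 \<in> hyperboloid" and W2: "W2 \<in> hyperboloid" and "W1 \<noteq> W2"
  shows "fst ` line_through (W1, a) (W2, b) = hyp_line W1 W2"
proof -
  define A where "A = hyp_dist W1 W2 / hypr_dist (W1, a) (W2, b)"
  have "A > 0"
    using hyp_dist_pos[OF W1 W2] hypr_dist_pos[of "(W1, a)" "(W2, b)"] W1 W2 \<open>W1 \<noteq> W2\<close>
    by (simp add: A_def HypR_def)
  have "fst ` line_through (W1, a) (W2, b) = range (\<lambda>t. hyp_geod W1 (hyp_dir W1 W2) (A * t))"
    by (simp add: line_through_def unit_line_apply A_def image_image)
  also have "\<dots> = hyp_geod W1 (hyp_dir W1 W2) ` range (\<lambda>t. A * t)" by (simp only: image_image)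
  also have "range (\<lambda>t. A * t) = UNIV"
    using \<open>A > 0\<close> by (intro surjI[where f = "\<lambda>s. s / A"]) simp
  finally show ?thesis by (simp add: hyp_line_def)
qed

lemma mink_hyp_normal:
  assumes "P \<in> hyperboloid" "Q \<in> hyperboloid" "P \<noteq> Q"
  shows "mink (hyp_normal P Q) (hyp_normal P Q) = -1"
  using unit_tangent_frame[OF unit_tangent_hyp_dir[OF assms]] by (simp add: hyp_normal_def)

lemma hyp_line_eq_orthogonal:
  assumes P: "P \<in> hyperboloid" and Q: "Q \<in> hyperboloid" and "P \<noteq> Q"
  shows "hyp_line P Q = {Z \<in> hyperboloid. mink Z (hyp_normal P Q) = 0}"
proof -
  define V where "V = hyp_dir P Q"
  have u: "unit_tangent P V" using unit_tangent_hyp_dir[OF assms] by (simp add: V_def)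
  note f = unit_tangent_frame[OF u]
  show ?thesis
  proof (intro subset_antisym subsetI)
    fix Z assume "Z \<in> hyp_line P Q"
    then obtain s where Z: "Z = hyp_geod P V s" unfolding hyp_line_def V_def by blast
    then have "Z \<in> hyperboloid" using hyp_geod_in_hyperboloid[OF u] by simp
    moreover have "mink Z (mink_cross P V) = 0" using f by (simp add: Z hyp_geod_def mink_linear)
    ultimately show "Z \<in> {Z \<in> hyperboloid. mink Z (hyp_normal P Q) = 0}"
      by (simp add: hyp_normal_def V_def)
  next
    fix Z assume "Z \<in> {Z \<in> hyperboloid. mink Z (hyp_normal P Q) = 0}"
    then have Z: "Z \<in> hyperboloid" and "mink Z (mink_cross P V) = 0"
      by (simp_all add: hyp_normal_def V_def)
    define \<alpha> \<beta> where "\<alpha> = mink Z P" and "\<beta> = - mink Z V"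
    have dec: "Z = \<alpha> *\<^sub>R P + \<beta> *\<^sub>R V"
      using unit_tangent_frame_decomp[OF u, of Z] \<open>mink Z (mink_cross P V) = 0\<close>
      by (simp add: \<alpha>_def \<beta>_def)
    have "1 = mink Z Z" using Z by (simp add: hyperboloid_def)
    also have "\<dots> = mink (\<alpha> *\<^sub>R P + \<beta> *\<^sub>R V) (\<alpha> *\<^sub>R P + \<beta> *\<^sub>R V)" by (simp only: dec[symmetric])
    also have "\<dots> = \<alpha>\<^sup>2 - \<beta>\<^sup>2" by (simp add: mink_linear f power2_eq_square)
    finally have "\<alpha>\<^sup>2 = \<beta>\<^sup>2 + 1" by simp
    moreover have "\<alpha> \<ge> 1" using mink_ge_1[OF Z P] by (simp add: \<alpha>_def)
    ultimately have "cosh (arsinh \<beta>) = \<alpha>"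
      by (simp add: cosh_arsinh_real real_sqrt_unique)
    then have "Z = hyp_geod P V (arsinh \<beta>)" using dec by (simp add: hyp_geod_def)
    then show "Z \<in> hyp_line P Q" by (simp add: hyp_line_def V_def)
  qed
qed

text \<open>The Beltrami--Klein model: central projection of the hyperboloid to the unit disc in the
  plane \<open>x0 = 1\<close>. It maps hyperbolic lines to chords, because \<open>mink Z N\<close> is \<open>fst Z\<close> times an
  affine function of \<open>klein Z\<close>.\<close>
definition klein :: "v3 \<Rightarrow> real \<times> real" where
  "klein Z = (fst (snd Z) / fst Z, snd (snd Z) / fst Z)"

definition klein_inv :: "real \<times> real \<Rightarrow> v3" where
  "klein_inv k = (1 / sqrt (1 - (norm k)\<^sup>2)) *\<^sub>R (1, fst k, snd k)"

lemma norm_klein: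
  assumes "Z \<in> hyperboloid"
  shows "(norm (klein Z))\<^sup>2 = 1 - 1 / (fst Z)\<^sup>2"
proof -
  obtain z0 z1 z2 where Z: "Z = (z0, z1, z2)" by (cases Z) auto
  have h: "z1 * z1 + z2 * z2 = z0 * z0 - 1" and "z0 > 0" using assms by (auto simp: Z hyperboloid_iff)
  have "(norm (klein Z))\<^sup>2 = (z1 * z1 + z2 * z2) / (z0 * z0)"
    by (simp add: Z klein_def norm_Pair power_divide power2_eq_square add_divide_distrib)
  also have "\<dots> = 1 - 1 / (fst Z)\<^sup>2" using \<open>z0 > 0\<close> by (simp add: h Z power2_eq_square field_simps)
  finally show ?thesis .
qed

lemma klein_in_ball:
  assumes "Z \<in> hyperboloid"
  shows "klein Z \<in> ball 0 1"
proof -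
  have "fst Z > 0" using assms by (simp add: hyperboloid_def)
  then have "(norm (klein Z))\<^sup>2 < 1\<^sup>2" using norm_klein[OF assms] by simp
  then show ?thesis by (simp add: power_less_imp_less_base)
qed

lemma klein_inv:
  assumes "k \<in> ball 0 1"
  shows "klein_inv k \<in> hyperboloid" and "klein (klein_inv k) = k"
proof -
  obtain k1 k2 where k: "k = (k1, k2)" by (cases k)
  define c where "c = 1 / sqrt (1 - (k1\<^sup>2 + k2\<^sup>2))"
  have "k1\<^sup>2 + k2\<^sup>2 < 1" using assms by (simp add: k norm_Pair)
  then have "c > 0" and cc: "c * c * (1 - (k1\<^sup>2 + k2\<^sup>2)) = 1" by (simp_all add: c_def)
  have inv: "klein_inv k = (c, c * k1, c * k2)" by (simp add: klein_inv_def k c_def norm_Pair)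
  show "klein_inv k \<in> hyperboloid"
    using cc \<open>c > 0\<close> by (simp add: inv hyperboloid_iff power2_eq_square algebra_simps)
  show "klein (klein_inv k) = k" using \<open>c > 0\<close> unfolding inv by (simp add: klein_def k)
qed

lemma klein_inv_klein:
  assumes "Z \<in> hyperboloid"
  shows "klein_inv (klein Z) = Z"
proof -
  have "fst Z > 0" using assms by (simp add: hyperboloid_def)
  then have "1 / sqrt (1 - (norm (klein Z))\<^sup>2) = fst Z"
    using norm_klein[OF assms] by (simp add: real_sqrt_divide)
  then show ?thesis using \<open>fst Z > 0\<close> by (simp add: klein_inv_def klein_def)
qed

lemma inj_on_klein: "inj_on klein hyperboloid"
  by (rule inj_on_inverseI[of _ klein_inv]) (rule klein_inv_klein)

lemma mink_klein:
  assumes "Z \<in> hyperboloid"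
  shows "mink Z N = fst Z * mink (1, fst (klein Z), snd (klein Z)) N"
proof -
  have "fst Z \<noteq> 0" using assms by (simp add: hyperboloid_def)
  then show ?thesis by (cases Z, cases N) (simp add: klein_def field_simps)
qed

lemma klein_inv_chord_in_hyp_line:
  assumes P: "P \<in> hyperboloid" and Q: "Q \<in> hyperboloid" and "P \<noteq> Q"
    and k: "k \<in> affine hull {klein P, klein Q} \<inter> ball 0 1"
  shows "klein_inv k \<in> hyp_line P Q"
proof -
  define N where "N = hyp_normal P Q"
  define \<phi> where "\<phi> k = mink (1, fst k, snd k) N" for k
  have \<phi>: "\<phi> (x + t *\<^sub>R (y - x)) = (1 - t) * \<phi> x + t * \<phi> y" for x y t
    by (simp add: \<phi>_def mink_def algebra_simps)
  have "\<phi> (klein Z) = 0" if "Z \<in> hyp_line P Q" for Z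
  proof -
    have "Z \<in> hyperboloid" "mink Z N = 0"
      using that unfolding hyp_line_eq_orthogonal[OF assms(1-3)] N_def by simp_all
    then show ?thesis using mink_klein[of Z N] by (simp add: \<phi>_def hyperboloid_def)
  qed
  then have "\<phi> (klein P) = 0" "\<phi> (klein Q) = 0" using hyp_line[OF P Q] by blast+
  moreover obtain t where "k = klein P + t *\<^sub>R (klein Q - klein P)"
    using k unfolding affine_hull_2_alt by blast
  ultimately have "\<phi> k = 0" using \<phi> by simp
  moreover have "klein_inv k \<in> hyperboloid" "klein (klein_inv k) = k"
    using klein_inv[of k] k by simp_all
  ultimately show ?thesis
    using mink_klein[of "klein_inv k" N] hyp_line_eq_orthogonal[OF assms(1-3)] by (simp add: \<phi>_def N_def)
qed

lemma klein_image_chord_closed: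
  assumes Y: "Y \<subseteq> hyperboloid"
    and closed: "\<And>P Q. P \<in> Y \<Longrightarrow> Q \<in> Y \<Longrightarrow> P \<noteq> Q \<Longrightarrow> hyp_line P Q \<subseteq> Y"
    and "x \<in> klein ` Y" "y \<in> klein ` Y" "x \<noteq> y"
  shows "affine hull {x, y} \<inter> ball 0 1 \<subseteq> klein ` Y"
proof
  obtain P Q where PQ: "P \<in> Y" "Q \<in> Y" "x = klein P" "y = klein Q" using assms(3,4) by (elim imageE)
  then have "P \<noteq> Q" using \<open>x \<noteq> y\<close> by blast
  fix k assume k: "k \<in> affine hull {x, y} \<inter> ball 0 1"
  then have "klein_inv k \<in> hyp_line P Q"
    using PQ Y \<open>P \<noteq> Q\<close> by (intro klein_inv_chord_in_hyp_line) auto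
  then have "klein_inv k \<in> Y" using closed[OF PQ(1,2) \<open>P \<noteq> Q\<close>] by blast
  moreover have "k = klein (klein_inv k)" using klein_inv(2) k by simp
  ultimately show "k \<in> klein ` Y" by blast
qed

text \<open>In the Klein model, a subset of the hyperbolic plane closed under hyperbolic lines becomes
  a subset of the disc closed under chords.\<close>
lemma hyp_line_closed_eq_hyperboloid:
  assumes Y: "Y \<subseteq> hyperboloid"
    and closed: "\<And>P Q. P \<in> Y \<Longrightarrow> Q \<in> Y \<Longrightarrow> P \<noteq> Q \<Longrightarrow> hyp_line P Q \<subseteq> Y"
    and Z: "Z1 \<in> Y" "Z2 \<in> Y" "Z3 \<in> Y" "Z1 \<noteq> Z2" "Z3 \<notin> hyp_line Z1 Z2"
  shows "Y = hyperboloid"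
proof -
  note klein_eq = inj_onD[OF inj_on_klein]
  have "klein ` Y = ball 0 1"
  proof (rule chord_closed_eq_convex_open)
    show "klein ` Y \<subseteq> ball 0 1" using Y klein_in_ball by blast
  next
    fix x y assume xy: "x \<in> klein ` Y" "y \<in> klein ` Y" "x \<noteq> y"
    show "affine hull {x, y} \<inter> ball 0 1 \<subseteq> klein ` Y"
      using klein_image_chord_closed[OF Y _ xy] closed by blast
  next
    show "klein Z3 \<notin> affine hull {klein Z1, klein Z2}"
    proof
      assume "klein Z3 \<in> affine hull {klein Z1, klein Z2}"
      moreover have "klein Z3 \<in> ball 0 1" using klein_in_ball Y Z(3) by blast
      ultimately have "klein_inv (klein Z3) \<in> hyp_line Z1 Z2"
        using Y Z by (intro klein_inv_chord_in_hyp_line) blast+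
      moreover have "Z3 \<in> hyperboloid" using Y Z(3) by blast
      ultimately show False using klein_inv_klein Z(5) by simp
    qed
  next
    show "klein Z1 \<noteq> klein Z2" using klein_eq[of Z1 Z2] Y Z(1,2,4) by blast
    show "klein Z1 \<in> klein ` Y" "klein Z2 \<in> klein ` Y" "klein Z3 \<in> klein ` Y"
      using Z(1-3) by simp_all
  qed simp_all
  show ?thesis
  proof (intro subset_antisym subsetI)
    fix Z assume Z: "Z \<in> hyperboloid"
    then have "klein Z \<in> klein ` Y" using klein_in_ball \<open>klein ` Y = ball 0 1\<close> by blast
    then obtain Z' where "Z' \<in> Y" "klein Z = klein Z'" by blast
    then show "Z \<in> Y" using klein_eq[of Z Z'] Z Y by blast
  qed (use Y in blast)
qed

lemma hyp_line_closed_cases: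
  assumes Y: "Y \<subseteq> hyperboloid"
    and closed: "\<And>P Q. P \<in> Y \<Longrightarrow> Q \<in> Y \<Longrightarrow> P \<noteq> Q \<Longrightarrow> hyp_line P Q \<subseteq> Y"
    and "Z1 \<in> Y" "Z2 \<in> Y" "Z1 \<noteq> Z2"
  shows "Y = hyp_line Z1 Z2 \<or> Y = hyperboloid"
proof (cases "Y \<subseteq> hyp_line Z1 Z2")
  case True
  then show ?thesis using closed[OF assms(3-5)] by blast
next
  case False
  then obtain Z3 where "Z3 \<in> Y" "Z3 \<notin> hyp_line Z1 Z2" by blast
  then show ?thesis using hyp_line_closed_eq_hyperboloid[OF Y closed assms(3,4) _ assms(5)] by blast
qed

section \<open>Functions affine along geodesics\<close>

definition affine_on_geodesics :: "(v3 \<Rightarrow> real) \<Rightarrow> bool" where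
  "affine_on_geodesics f \<longleftrightarrow> (\<forall>X V. unit_tangent X V \<longrightarrow> (\<exists>c. \<forall>s. f (hyp_geod X V s) = f X + c * s))"

lemma affine_on_geodesicsD:
  assumes "affine_on_geodesics f" "P \<in> hyperboloid" "Q \<in> hyperboloid" "P \<noteq> Q"
  obtains c where "\<And>s. f (hyp_geod P (hyp_dir P Q) s) = f P + c * s"
    and "f Q = f P + c * hyp_dist P Q"
proof -
  obtain c where c: "\<And>s. f (hyp_geod P (hyp_dir P Q) s) = f P + c * s"
    using assms(1) unit_tangent_hyp_dir[OF assms(2-4)] unfolding affine_on_geodesics_def by blast
  show thesis
    by (rule that[OF c]) (use c[of "hyp_dist P Q"] hyp_geod_hyp_dir[OF assms(2,3)] in simp)
qed

lemma affine_on_geodesics_const_on_hyp_line: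
  assumes f: "affine_on_geodesics f" and "P \<in> hyperboloid" "Q \<in> hyperboloid" "P \<noteq> Q"
    and "f P = f Q" and "Z \<in> hyp_line P Q"
  shows "f Z = f P"
proof -
  obtain c where c: "\<And>s. f (hyp_geod P (hyp_dir P Q) s) = f P + c * s"
    and "f Q = f P + c * hyp_dist P Q"
    using affine_on_geodesicsD[OF assms(1-4)] by blast
  then have "c * hyp_dist P Q = 0" using \<open>f P = f Q\<close> by linarith
  then have "c = 0" using hyp_dist_pos[OF assms(2-4)] by simp
  moreover obtain s where "Z = hyp_geod P (hyp_dir P Q) s"
    using \<open>Z \<in> hyp_line P Q\<close> unfolding hyp_line_def by blast
  ultimately show ?thesis using c by simp
qed

lemma affine_on_geodesics_attains:
  assumes f: "affine_on_geodesics f" and "P \<in> hyperboloid" "Q \<in> hyperboloid" and "f P \<noteq> f Q"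
  obtains Z where "Z \<in> hyp_line P Q" "f Z = v"
proof -
  have "P \<noteq> Q" using \<open>f P \<noteq> f Q\<close> by blast
  obtain c where c: "\<And>s. f (hyp_geod P (hyp_dir P Q) s) = f P + c * s"
    and "f Q = f P + c * hyp_dist P Q"
    using affine_on_geodesicsD[OF assms(1-3) \<open>P \<noteq> Q\<close>] by blast
  then have "c \<noteq> 0" using \<open>f P \<noteq> f Q\<close> by auto
  then have "f (hyp_geod P (hyp_dir P Q) ((v - f P) / c)) = v" using c by simp
  moreover have "hyp_geod P (hyp_dir P Q) ((v - f P) / c) \<in> hyp_line P Q" by (simp add: hyp_line_def)
  ultimately show thesis using that by blast
qed

lemma exists_not_in_hyp_line:
  assumes "P \<in> hyperboloid" "Q \<in> hyperboloid" "P \<noteq> Q"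
  obtains Z where "Z \<in> hyperboloid" "Z \<notin> hyp_line P Q"
proof -
  define W where "W = hyp_normal P Q"
  have "unit_tangent P W"
    using unit_tangent_frame[OF unit_tangent_hyp_dir[OF assms]] assms(1)
    by (simp add: unit_tangent_def W_def hyp_normal_def)
  moreover have "mink (hyp_geod P W 1) W = - sinh 1"
    using \<open>unit_tangent P W\<close> by (simp add: hyp_geod_def mink_linear unit_tangent_def)
  ultimately show thesis
    using that[of "hyp_geod P W 1"] hyp_geod_in_hyperboloid hyp_line_eq_orthogonal[OF assms]
    by (simp add: W_def)
qed

text \<open>A level set is closed under hyperbolic lines and, \<open>f\<close> being non-constant, is not the
  whole plane.\<close>
lemma level_set_eq_hyp_line:
  assumes f: "affine_on_geodesics f" and Z: "Z1 \<in> hyperboloid" "Z2 \<in> hyperboloid" "f Z1 \<noteq> f Z2"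
    and AB: "A \<in> hyperboloid" "B \<in> hyperboloid" "A \<noteq> B" "f A = v" "f B = v"
  shows "{Z \<in> hyperboloid. f Z = v} = hyp_line A B"
proof -
  define L where "L = {Z \<in> hyperboloid. f Z = v}"
  have "L = hyp_line A B \<or> L = hyperboloid"
  proof (rule hyp_line_closed_cases)
    fix P Q assume "P \<in> L" "Q \<in> L" "P \<noteq> Q"
    then have "P \<in> hyperboloid" "Q \<in> hyperboloid" "f P = v" "f Q = v" by (simp_all add: L_def)
    show "hyp_line P Q \<subseteq> L"
    proof
      fix Z assume "Z \<in> hyp_line P Q"
      then have "Z \<in> hyperboloid" "f Z = f P"
        using hyp_line_subset[OF \<open>P \<in> hyperboloid\<close> \<open>Q \<in> hyperboloid\<close> \<open>P \<noteq> Q\<close>]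
          affine_on_geodesics_const_on_hyp_line[OF f \<open>P \<in> hyperboloid\<close> \<open>Q \<in> hyperboloid\<close> \<open>P \<noteq> Q\<close>]
          \<open>f P = v\<close> \<open>f Q = v\<close> by auto
      then show "Z \<in> L" using \<open>f P = v\<close> by (simp add: L_def)
    qed
  qed (use AB in \<open>simp_all add: L_def\<close>)
  moreover have "L \<noteq> hyperboloid"
  proof
    assume "L = hyperboloid"
    then have "f Z1 = v" "f Z2 = v" using Z(1,2) unfolding L_def by blast+
    then show False using Z(3) by simp
  qed
  ultimately show ?thesis by (simp add: L_def)
qed

text \<open>Besides a point \<open>A\<close> of the line \<open>Z1 Z2\<close>, the level set contains a point \<open>B\<close> of the line
  joining a point \<open>Z3\<close> off \<open>Z1 Z2\<close> to the point \<open>Q\<close> of \<open>Z1 Z2\<close> where \<open>f\<close> takes the value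
  \<open>2 v - f Z3\<close>; the two lines meet only in \<open>Q\<close>, so \<open>B \<noteq> A\<close>.\<close>
lemma level_set_is_hyp_line:
  assumes f: "affine_on_geodesics f" and Z: "Z1 \<in> hyperboloid" "Z2 \<in> hyperboloid" "f Z1 \<noteq> f Z2"
  obtains A B where "A \<in> hyperboloid" "B \<in> hyperboloid" "A \<noteq> B"
    and "{Z \<in> hyperboloid. f Z = v} = hyp_line A B"
proof -
  have "Z1 \<noteq> Z2" using Z(3) by blast
  obtain Z3 where Z3: "Z3 \<in> hyperboloid" "Z3 \<notin> hyp_line Z1 Z2"
    using exists_not_in_hyp_line[OF Z(1,2) \<open>Z1 \<noteq> Z2\<close>] .
  note line12 = hyp_line_subset[OF Z(1,2) \<open>Z1 \<noteq> Z2\<close>]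
  obtain A where A: "A \<in> hyp_line Z1 Z2" "f A = v" using affine_on_geodesics_attains[OF f Z] .
  obtain B where B: "B \<in> hyperboloid" "B \<noteq> A" "f B = v"
  proof (cases "f Z3 = v")
    case True
    then show thesis using that Z3 A by blast
  next
    case False
    obtain Q where Q: "Q \<in> hyp_line Z1 Z2" "f Q = 2 * v - f Z3"
      using affine_on_geodesics_attains[OF f Z] .
    have "Q \<in> hyperboloid" "Z3 \<noteq> Q" using Q(1) Z3 line12 by blast+
    moreover have "f Z3 \<noteq> f Q" using False Q(2) by simp
    ultimately obtain B where B: "B \<in> hyp_line Z3 Q" "f B = v"
      using affine_on_geodesics_attains[OF f Z3(1)] by blast
    have "B \<noteq> A"
    proof
      assume "B = A"
      have "A \<noteq> Q" using A(2) Q(2) False by auto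
      have "hyp_line A Q = hyp_line Z3 Q"
        using hyp_line_eq_hyp_line[OF Z3(1) \<open>Q \<in> hyperboloid\<close> \<open>Z3 \<noteq> Q\<close> _ _ \<open>A \<noteq> Q\<close>]
          B(1) \<open>B = A\<close> hyp_line(2)[OF Z3(1) \<open>Q \<in> hyperboloid\<close>] by simp
      moreover have "hyp_line A Q = hyp_line Z1 Z2"
        using hyp_line_eq_hyp_line[OF Z(1,2) \<open>Z1 \<noteq> Z2\<close> A(1) Q(1) \<open>A \<noteq> Q\<close>] .
      ultimately show False
        using Z3 hyp_line[OF Z3(1) \<open>Q \<in> hyperboloid\<close>] by simp
    qed
    moreover have "B \<in> hyperboloid" using B(1) hyp_line_subset \<open>Z3 \<noteq> Q\<close> Z3(1) \<open>Q \<in> hyperboloid\<close> by blast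
    ultimately show thesis using that B(2) by blast
  qed
  have "A \<in> hyperboloid" using A(1) line12 by blast
  then show thesis
    using that[of A B] level_set_eq_hyp_line[OF f Z, of A B v] A B by simp
qed

lemma mink_hyp_geod_ne_0:
  assumes "mink X N \<noteq> 0" and "\<bar>mink V N\<bar> \<le> \<bar>mink X N\<bar>"
  shows "mink (hyp_geod X V s) N \<noteq> 0"
proof -
  have "\<bar>sinh s\<bar> < cosh s"
    using sinh_less_cosh_real[of s] sinh_less_cosh_real[of "- s"] by (simp add: abs_less_iff)
  have "\<bar>sinh s * mink V N\<bar> = \<bar>sinh s\<bar> * \<bar>mink V N\<bar>" by (simp add: abs_mult)
  also have "\<dots> \<le> \<bar>sinh s\<bar> * \<bar>mink X N\<bar>" using assms(2) by (simp add: mult_left_mono)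
  also have "\<dots> < cosh s * \<bar>mink X N\<bar>"
    using \<open>\<bar>sinh s\<bar> < cosh s\<close> assms(1) by (simp add: mult_strict_right_mono)
  also have "\<dots> = \<bar>cosh s * mink X N\<bar>" by (simp add: abs_mult)
  finally have "cosh s * mink X N + sinh s * mink V N \<noteq> 0" by linarith
  then show ?thesis by (simp add: hyp_geod_def mink_linear)
qed

lemma exists_slanted_unit_direction:
  fixes k0 k1 k2 :: real
  assumes kk: "k1 * k1 + k2 * k2 = k0 * k0 + 1" and "k0 \<noteq> 0"
  obtains p q where "p * p + q * q = 1" "q \<noteq> 0" "\<bar>p * k1 + q * k2\<bar> \<le> \<bar>k0\<bar>"
proof -
  obtain p q where "q \<noteq> 0" and pq: "\<bar>p * k1 + q * k2\<bar> \<le> \<bar>k0\<bar> * sqrt (p * p + q * q)"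
  proof (cases "k1 = 0")
    case False
    then show thesis using that[of "- k1" k2] by simp
  next
    case True
    then have "k2 * k2 = k0 * k0 + 1" using kk by simp
    then have "k2 * k2 > 0" using zero_le_square[of k0] by linarith
    then have "k2 \<noteq> 0" by auto
    have "\<bar>k0\<bar> * 1 \<le> \<bar>k0\<bar> * sqrt (1 * 1 + (k0 / k2) * (k0 / k2))"
      by (intro mult_left_mono) simp_all
    then show thesis using that[of "k0 / k2" 1] True \<open>k2 \<noteq> 0\<close> \<open>k0 \<noteq> 0\<close> by simp
  qed
  define \<rho> where "\<rho> = sqrt (p * p + q * q)"
  have "q * q > 0" using \<open>q \<noteq> 0\<close> not_real_square_gt_zero by blast
  then have "p * p + q * q > 0" using zero_le_square[of p] by linarith
  then have "\<rho> > 0" and "\<rho> * \<rho> = p * p + q * q" by (simp_all add: \<rho>_def)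
  show thesis
  proof (rule that[of "p / \<rho>" "q / \<rho>"])
    show "p / \<rho> * (p / \<rho>) + q / \<rho> * (q / \<rho>) = 1"
      using \<open>\<rho> * \<rho> = _\<close> \<open>\<rho> > 0\<close> \<open>q \<noteq> 0\<close> by (simp add: divide_simps)
    show "q / \<rho> \<noteq> 0" using \<open>q \<noteq> 0\<close> \<open>\<rho> > 0\<close> by simp
    have "\<bar>p / \<rho> * k1 + q / \<rho> * k2\<bar> = \<bar>p * k1 + q * k2\<bar> / \<rho>"
      using \<open>\<rho> > 0\<close> by (simp flip: add_divide_distrib)
    also have "\<dots> \<le> \<bar>k0\<bar>" using pq \<open>\<rho> > 0\<close> by (simp add: \<rho>_def divide_le_eq mult.commute)
    finally show "\<bar>p / \<rho> * k1 + q / \<rho> * k2\<bar> \<le> \<bar>k0\<bar>" .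
  qed
qed

text \<open>This is the failure of the parallel postulate. In the frame \<open>X, D, W\<close> write
  \<open>N = k0 X - k1 D - k2 W\<close>, so that \<open>k1\<^sup>2 + k2\<^sup>2 = k0\<^sup>2 + 1\<close>; the geodesic in a direction
  \<open>p D + q W\<close> with \<open>\<bar>p k1 + q k2\<bar> \<le> \<bar>k0\<bar>\<close> never meets the line (\<open>mink_hyp_geod_ne_0\<close>).\<close>
lemma exists_other_disjoint_geodesic:
  assumes u: "unit_tangent X D" and N: "mink N N = -1" and XN: "mink X N \<noteq> 0"
  obtains V where "unit_tangent X V" "mink V (mink_cross X D) \<noteq> 0"
    and "\<And>s. mink (hyp_geod X V s) N \<noteq> 0"
proof -
  define W where "W = mink_cross X D"
  note f = unit_tangent_frame[OF u, folded W_def]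
  define k0 k1 k2 where "k0 = mink X N" and "k1 = mink D N" and "k2 = mink W N"
  have "N = k0 *\<^sub>R X - k1 *\<^sub>R D - k2 *\<^sub>R W"
    using unit_tangent_frame_decomp[OF u, of N] by (simp add: k0_def k1_def k2_def W_def mink_commute)
  then have "mink N N = mink (k0 *\<^sub>R X - k1 *\<^sub>R D - k2 *\<^sub>R W) (k0 *\<^sub>R X - k1 *\<^sub>R D - k2 *\<^sub>R W)"
    by (simp only: flip: \<open>N = _\<close>)
  also have "\<dots> = k0 * k0 - k1 * k1 - k2 * k2" by (simp add: mink_linear f)
  finally have "k1 * k1 + k2 * k2 = k0 * k0 + 1" using N by simp
  then obtain p q where pq: "p * p + q * q = 1" "q \<noteq> 0" "\<bar>p * k1 + q * k2\<bar> \<le> \<bar>k0\<bar>"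
    using exists_slanted_unit_direction XN by (metis k0_def)
  define V where "V = p *\<^sub>R D + q *\<^sub>R W"
  have "unit_tangent X V" using f u pq(1) by (simp add: unit_tangent_def V_def mink_linear algebra_simps)
  moreover have "mink V W \<noteq> 0" using f pq(2) by (simp add: V_def mink_linear)
  moreover have "\<bar>mink V N\<bar> \<le> \<bar>mink X N\<bar>" using pq(3) by (simp add: V_def mink_linear k0_def k1_def k2_def)
  ultimately show thesis using that mink_hyp_geod_ne_0 XN by (simp add: W_def)
qed

text \<open>If \<open>f\<close> were not constant, its level sets at \<open>v = f X\<close> and \<open>v + 1\<close> would be disjoint
  hyperbolic lines, and a second line through \<open>X\<close> missing the latter would have to lie in the
  former.\<close>
theorem affine_on_geodesics_const:
  assumes f: "affine_on_geodesics f" and Z: "Z1 \<in> hyperboloid" "Z2 \<in> hyperboloid"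
  shows "f Z1 = f Z2"
proof (rule ccontr)
  assume "f Z1 \<noteq> f Z2"
  note level = level_set_is_hyp_line[OF f Z \<open>f Z1 \<noteq> f Z2\<close>]
  define X v where "X = Z1" and "v = f Z1"
  obtain A B where AB: "A \<in> hyperboloid" "B \<in> hyperboloid" "A \<noteq> B"
    and L: "{Z \<in> hyperboloid. f Z = v} = hyp_line A B" using level .
  obtain A1 B1 where AB1: "A1 \<in> hyperboloid" "B1 \<in> hyperboloid" "A1 \<noteq> B1"
    and L1: "{Z \<in> hyperboloid. f Z = v + 1} = hyp_line A1 B1" using level .
  have "X \<in> {Z \<in> hyperboloid. f Z = v}" using Z(1) by (simp add: X_def v_def)
  then have X: "X \<in> hyperboloid" "X \<in> hyp_line A B" using L by blast+
  obtain D where u: "unit_tangent X D" and LD: "hyp_line A B = range (hyp_geod X D)"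
    using hyp_line_through_point[OF AB X(2)] .
  have "X \<notin> {Z \<in> hyperboloid. f Z = v + 1}" by (simp add: X_def v_def)
  then have "X \<notin> hyp_line A1 B1" using L1 by simp
  then have "mink X (hyp_normal A1 B1) \<noteq> 0" using X(1) hyp_line_eq_orthogonal[OF AB1] by simp
  then obtain V where V: "unit_tangent X V" "mink V (mink_cross X D) \<noteq> 0"
    and miss: "\<And>s. mink (hyp_geod X V s) (hyp_normal A1 B1) \<noteq> 0"
    using exists_other_disjoint_geodesic[OF u mink_hyp_normal[OF AB1]] by blast
  obtain c where c: "\<And>s. f (hyp_geod X V s) = v + c * s"
    using f V(1) unfolding affine_on_geodesics_def X_def v_def by blast
  have "c = 0"
  proof (rule ccontr)
    assume "c \<noteq> 0"
    then have "hyp_geod X V (1 / c) \<in> {Z \<in> hyperboloid. f Z = v + 1}"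
      using c[of "1 / c"] hyp_geod_in_hyperboloid[OF V(1)] by simp
    then show False using miss L1 hyp_line_eq_orthogonal[OF AB1] by simp
  qed
  then have "hyp_geod X V 1 \<in> {Z \<in> hyperboloid. f Z = v}"
    using c[of 1] hyp_geod_in_hyperboloid[OF V(1)] by simp
  then have "hyp_geod X V 1 \<in> range (hyp_geod X D)" using L LD by simp
  then obtain s where s: "hyp_geod X V 1 = hyp_geod X D s" by (rule rangeE)
  have "mink (hyp_geod X D s) (mink_cross X D) = 0"
    using unit_tangent_frame[OF u] by (simp add: hyp_geod_def mink_linear)
  moreover have "mink (hyp_geod X V 1) (mink_cross X D) = sinh 1 * mink V (mink_cross X D)"
    using unit_tangent_frame[OF u] by (simp add: hyp_geod_def mink_linear)
  ultimately show False using s V(2) by simp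
qed

section \<open>Classification\<close>

lemma totally_geodesic_subset: "totally_geodesic d S X \<Longrightarrow> X \<subseteq> S"
  by (simp add: totally_geodesic_def)

lemma totally_geodesic_HypR_two_points:
  assumes "totally_geodesic hypr_dist HypR X"
  obtains P Q where "P \<in> X" "Q \<in> X" "P \<noteq> Q"
proof -
  obtain p where "p \<in> X" using assms by (auto simp: totally_geodesic_def)
  then obtain G where "is_geodesic hypr_dist HypR G" "G \<subseteq> X"
    using assms unfolding totally_geodesic_def by blast
  then obtain l where l: "is_prod_line l" "range l \<subseteq> X" by (auto simp: is_geodesic_HypR_iff)
  have "hypr_dist (l 0) (l 1) = 1" using is_prod_line_dist[OF l(1), of 0 1] by simp
  then have "l 0 \<noteq> l 1" using hypr_dist_self[OF is_prod_line_in_HypR[OF l(1)]] by auto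
  then show thesis using that l(2) by blast
qed

lemma fst_image_hyp_line_closed:
  assumes X: "totally_geodesic hypr_dist HypR X"
    and "W1 \<in> fst ` X" "W2 \<in> fst ` X" "W1 \<noteq> W2"
  shows "hyp_line W1 W2 \<subseteq> fst ` X"
proof -
  obtain P Q where "P \<in> X" "Q \<in> X" "W1 = fst P" "W2 = fst Q" using assms(2,3) by blast
  then have PQ: "(W1, snd P) \<in> X" "(W2, snd Q) \<in> X" by simp_all
  then have "W1 \<in> hyperboloid" "W2 \<in> hyperboloid"
    using totally_geodesic_subset[OF X] by (auto simp: HypR_def)
  moreover have "line_through (W1, snd P) (W2, snd Q) \<subseteq> X"
    using totally_geodesic_line_through[OF X PQ] \<open>W1 \<noteq> W2\<close> by simp
  then have "fst ` line_through (W1, snd P) (W2, snd Q) \<subseteq> fst ` X" by (rule image_mono)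
  ultimately show ?thesis using fst_line_through \<open>W1 \<noteq> W2\<close> by simp
qed

lemma totally_geodesic_vertical_saturated:
  assumes X: "totally_geodesic hypr_dist HypR X"
    and "(Z, h) \<in> X" "(Z, k) \<in> X" "h \<noteq> k"
  shows "X = fst ` X \<times> UNIV"
proof -
  have Z: "Z \<in> hyperboloid" using assms(2) totally_geodesic_subset[OF X] by (auto simp: HypR_def)
  have vert: "(Z, t) \<in> X" for t
    using totally_geodesic_line_through[OF X assms(2,3)] line_through_vertical[OF Z \<open>h \<noteq> k\<close>]
      \<open>h \<noteq> k\<close> by auto
  have sat: "(W, t) \<in> X" if W: "(W, h') \<in> X" for W h' t
  proof (cases "W = Z")
    case True
    then show ?thesis using vert by simp
  next
    case False
    have W': "W \<in> hyperboloid" using W totally_geodesic_subset[OF X] by (auto simp: HypR_def)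
    define V where "V = hyp_dir Z W"
    have u: "unit_tangent Z V" using unit_tangent_hyp_dir[OF Z W'] False by (simp add: V_def)
    have W_eq: "hyp_geod Z V (hyp_dist Z W) = W" using hyp_geod_hyp_dir[OF Z W'] by (simp add: V_def)
    have "flat_map Z V (hyp_dist Z W, t) \<in> X"
    proof (rule totally_geodesic_flat[OF X u, of "(0, 0)" "(0, 1)" "(hyp_dist Z W, h')"])
      show "flat_map Z V (0, 0) \<in> X" "flat_map Z V (0, 1) \<in> X" using vert by (simp_all add: flat_map_def)
      show "flat_map Z V (hyp_dist Z W, h') \<in> X" using W W_eq by (simp add: flat_map_def)
      show "(hyp_dist Z W, h') \<notin> affine hull {(0, 0), (0, 1)}"
        using hyp_dist_pos[OF Z W'] False by (auto simp: affine_hull_2_alt)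
    qed simp
    then show ?thesis using W_eq by (simp add: flat_map_def)
  qed
  show ?thesis
  proof (intro subset_antisym subsetI)
    fix P :: "v3 \<times> real" assume "P \<in> X"
    then have "fst P \<in> fst ` X" by (rule imageI)
    then show "P \<in> fst ` X \<times> UNIV" by (simp add: mem_Times_iff)
  next
    fix P :: "v3 \<times> real" assume "P \<in> fst ` X \<times> UNIV"
    then obtain Q where "Q \<in> X" "fst P = fst Q" unfolding mem_Times_iff by blast
    then have "(fst P, snd P) \<in> X" using sat[of "fst Q" "snd Q" "snd P"] by simp
    then show "P \<in> X" by simp
  qed
qed

lemma totally_geodesic_graph_affine:
  assumes X: "totally_geodesic hypr_dist HypR X" and "inj_on fst X"
    and graph: "\<And>Z. Z \<in> hyperboloid \<Longrightarrow> (Z, f Z) \<in> X"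
  shows "affine_on_geodesics f"
  unfolding affine_on_geodesics_def
proof (intro allI impI)
  fix X0 V assume u: "unit_tangent X0 V"
  have X0: "X0 \<in> hyperboloid" using u by (simp add: unit_tangent_def)
  define Z where "Z = hyp_geod X0 V 1"
  have Z: "Z \<in> hyperboloid" using hyp_geod_in_hyperboloid[OF u] by (simp add: Z_def)
  have "X0 \<noteq> Z" using hyp_geod_inj[OF u, of 0 1] by (auto simp: Z_def)
  have dir: "hyp_dir X0 Z = V" using hyp_dir_hyp_geod[OF u, of 1] by (simp add: Z_def)
  define P Q where "P = (X0, f X0)" and "Q = (Z, f Z)"
  have "P \<noteq> Q" using \<open>X0 \<noteq> Z\<close> by (simp add: P_def Q_def)
  define D where "D = hypr_dist P Q"
  have "D > 0" using hypr_dist_pos[of P Q] X0 Z \<open>P \<noteq> Q\<close> by (simp add: D_def P_def Q_def HypR_def)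
  define A where "A = hyp_dist X0 Z / D"
  have "A > 0" using hyp_dist_pos[OF X0 Z \<open>X0 \<noteq> Z\<close>] \<open>D > 0\<close> by (simp add: A_def)
  have line: "unit_line P Q t = (hyp_geod X0 V (A * t), (f Z - f X0) / D * t + f X0)" for t
    by (simp add: unit_line_apply P_def Q_def dir A_def D_def)
  have "f (hyp_geod X0 V s) = f X0 + ((f Z - f X0) / D / A) * s" for s
  proof -
    have "unit_line P Q (s / A) \<in> X"
      using totally_geodesic_line_through[OF X _ _ \<open>P \<noteq> Q\<close>] graph X0 Z
      by (auto simp: line_through_def P_def Q_def)
    then have "(hyp_geod X0 V s, (f Z - f X0) / D * (s / A) + f X0) \<in> X"
      using \<open>A > 0\<close> by (simp add: line)
    moreover have "(hyp_geod X0 V s, f (hyp_geod X0 V s)) \<in> X"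
      using graph hyp_geod_in_hyperboloid[OF u] by blast
    ultimately have "(f Z - f X0) / D * (s / A) + f X0 = f (hyp_geod X0 V s)"
      using inj_onD[OF \<open>inj_on fst X\<close>] by fastforce
    then show ?thesis by simp
  qed
  then show "\<exists>c. \<forall>s. f (hyp_geod X0 V s) = f X0 + c * s" by blast
qed

lemma totally_geodesic_graph_not_in_flat:
  assumes X: "totally_geodesic hypr_dist HypR X" and inj: "inj_on fst X"
    and P: "(Z1, h) \<in> X" and Q: "(Z2, k) \<in> X" and R: "(Z3, h3) \<in> X"
    and "h \<noteq> k" and nc: "(Z3, h3) \<notin> line_through (Z1, h) (Z2, k)"
  shows "Z3 \<notin> hyp_line Z1 Z2"
proof
  assume "Z3 \<in> hyp_line Z1 Z2"
  have "Z1 \<noteq> Z2" using inj_onD[OF inj, of "(Z1, h)" "(Z2, k)"] P Q \<open>h \<noteq> k\<close> by auto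
  have Z1: "Z1 \<in> hyperboloid" and Z2: "Z2 \<in> hyperboloid"
    using P Q totally_geodesic_subset[OF X] by (auto simp: HypR_def)
  define V where "V = hyp_dir Z1 Z2"
  have u: "unit_tangent Z1 V" using unit_tangent_hyp_dir[OF Z1 Z2 \<open>Z1 \<noteq> Z2\<close>] by (simp add: V_def)
  obtain \<sigma> where \<sigma>: "Z3 = hyp_geod Z1 V \<sigma>" using \<open>Z3 \<in> hyp_line Z1 Z2\<close> unfolding hyp_line_def V_def by blast
  have F: "flat_map Z1 V (0, h) = (Z1, h)" "flat_map Z1 V (hyp_dist Z1 Z2, k) = (Z2, k)"
    "flat_map Z1 V (\<sigma>, h3) = (Z3, h3)"
    using hyp_geod_hyp_dir[OF Z1 Z2] \<sigma> by (simp_all add: flat_map_def V_def)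
  have ne: "(0, h) \<noteq> (hyp_dist Z1 Z2, k)" using \<open>h \<noteq> k\<close> by simp
  have nc': "(\<sigma>, h3) \<notin> affine hull {(0, h), (hyp_dist Z1 Z2, k)}"
    using nc line_through_flat_map[OF u ne] F by (metis image_eqI)
  have "flat_map Z1 V (0, h + 1) \<in> X"
    using totally_geodesic_flat[OF X u _ _ _ ne nc'] F P Q R by simp
  then have "(Z1, h + 1) \<in> X" by (simp add: flat_map_def)
  then show False using inj_onD[OF inj, of "(Z1, h + 1)" "(Z1, h)"] P by simp
qed

lemma nontrivial_totally_geodesic_vertical:
  assumes NT: "nontrivial_totally_geodesic hypr_dist HypR X"
    and "(Z, h) \<in> X" "(Z, k) \<in> X" "h \<noteq> k"
  shows "\<exists>\<gamma>. is_geodesic hyp_dist hyperboloid \<gamma> \<and> X = \<gamma> \<times> UNIV"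
proof -
  have TG: "totally_geodesic hypr_dist HypR X" and "\<not> is_geodesic hypr_dist HypR X" and "X \<noteq> HypR"
    using NT by (simp_all add: nontrivial_totally_geodesic_def)
  have XY: "X = fst ` X \<times> UNIV" using totally_geodesic_vertical_saturated[OF TG assms(2-4)] .
  have Y: "fst ` X \<subseteq> hyperboloid" using totally_geodesic_subset[OF TG] by (auto simp: HypR_def)
  have "Z \<in> fst ` X" using assms(2) by (metis fst_conv imageI)
  then have Z: "Z \<in> hyperboloid" using Y by blast
  have "fst ` X \<noteq> {Z}"
  proof
    assume Y1: "fst ` X = {Z}"
    from XY have "X = {Z} \<times> UNIV" unfolding Y1 .
    also have "\<dots> = line_through (Z, 0) (Z, 1)" using line_through_vertical[OF Z, of 0 1] by simp
    finally have "X = line_through (Z, 0) (Z, 1)" .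
    then show False using \<open>\<not> is_geodesic hypr_dist HypR X\<close> is_geodesic_line_through Z
      by (simp add: HypR_def)
  qed
  then obtain W where "W \<in> fst ` X" "W \<noteq> Z" using \<open>Z \<in> fst ` X\<close> by blast
  then have W: "W \<in> fst ` X" "Z \<noteq> W" by simp_all
  have "fst ` X = hyp_line Z W \<or> fst ` X = hyperboloid"
    using hyp_line_closed_cases[OF Y fst_image_hyp_line_closed[OF TG] \<open>Z \<in> fst ` X\<close> W] .
  moreover have "fst ` X \<noteq> hyperboloid"
  proof
    assume Y1: "fst ` X = hyperboloid"
    from XY have "X = HypR" unfolding Y1 HypR_def .
    then show False using \<open>X \<noteq> HypR\<close> by simp
  qed
  moreover have "is_geodesic hyp_dist hyperboloid (hyp_line Z W)"
    using is_geodesic_hyp_line[OF Z _ W(2)] W(1) Y by blast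
  ultimately have Y1: "fst ` X = hyp_line Z W" by blast
  from XY have "X = hyp_line Z W \<times> UNIV" unfolding Y1 .
  then show ?thesis using \<open>is_geodesic hyp_dist hyperboloid (hyp_line Z W)\<close> by blast
qed

lemma nontrivial_totally_geodesic_horizontal:
  assumes NT: "nontrivial_totally_geodesic hypr_dist HypR X" and "X \<subseteq> UNIV \<times> {r}"
  shows "X = hyperboloid \<times> {r}"
proof -
  have TG: "totally_geodesic hypr_dist HypR X" and "\<not> is_geodesic hypr_dist HypR X"
    using NT by (simp_all add: nontrivial_totally_geodesic_def)
  have XY: "X = fst ` X \<times> {r}"
  proof (intro subset_antisym subsetI)
    fix S :: "v3 \<times> real" assume "S \<in> X"
    then have "fst S \<in> fst ` X" "snd S = r" using assms(2) by (auto simp: mem_Times_iff)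
    then show "S \<in> fst ` X \<times> {r}" by (simp add: mem_Times_iff)
  next
    fix S :: "v3 \<times> real" assume "S \<in> fst ` X \<times> {r}"
    then obtain S' where "S' \<in> X" "fst S = fst S'" "snd S = r" unfolding mem_Times_iff by blast
    moreover have "snd S' = r" using \<open>S' \<in> X\<close> assms(2) by (auto simp: mem_Times_iff)
    ultimately show "S \<in> X" by (metis prod.collapse)
  qed
  have Y: "fst ` X \<subseteq> hyperboloid" using totally_geodesic_subset[OF TG] by (auto simp: HypR_def)
  obtain P Q where "P \<in> X" "Q \<in> X" "P \<noteq> Q" using totally_geodesic_HypR_two_points[OF TG] .
  moreover have "snd P = r" "snd Q = r" using \<open>P \<in> X\<close> \<open>Q \<in> X\<close> assms(2) by (auto simp: mem_Times_iff)
  ultimately have PQ: "fst P \<in> fst ` X" "fst Q \<in> fst ` X" "fst P \<noteq> fst Q"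
    by (auto simp: prod_eq_iff)
  then have PH: "fst P \<in> hyperboloid" "fst Q \<in> hyperboloid" using Y by blast+
  have "fst ` X \<noteq> hyp_line (fst P) (fst Q)"
  proof
    assume Y1: "fst ` X = hyp_line (fst P) (fst Q)"
    from XY have "X = hyp_line (fst P) (fst Q) \<times> {r}" unfolding Y1 .
    then have "X = line_through (fst P, r) (fst Q, r)" using line_through_horizontal[OF PH PQ(3)] by simp
    then show False using \<open>\<not> is_geodesic hypr_dist HypR X\<close> is_geodesic_line_through PH PQ(3)
      by (simp add: HypR_def)
  qed
  then have Y1: "fst ` X = hyperboloid"
    using hyp_line_closed_cases[OF Y fst_image_hyp_line_closed[OF TG] PQ] by simp
  from XY show ?thesis unfolding Y1 .
qed

lemma the_snd_inj_on_fst: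
  assumes "inj_on fst X" "S \<in> X"
  shows "(THE t. (fst S, t) \<in> X) = snd S"
proof (rule the_equality)
  show "(fst S, snd S) \<in> X" using assms(2) by simp
  fix t assume "(fst S, t) \<in> X"
  with assms have "(fst S, t) = S" by (intro inj_onD[of fst X]) simp_all
  then show "t = snd S" by (metis snd_conv)
qed

text \<open>A nontrivial totally geodesic graph with two points at different heights contains a third
  point off their line, whose projection lies off the projected line (otherwise the flat through
  the three points would lie in the graph). So the graph lies over the whole plane, and its
  height is affine along every geodesic without being constant.\<close>
lemma nontrivial_totally_geodesic_not_graph:
  assumes NT: "nontrivial_totally_geodesic hypr_dist HypR X" and inj: "inj_on fst X"
    and P: "P \<in> X" and Q: "Q \<in> X" and "snd P \<noteq> snd Q"
  shows False
proof -
  have TG: "totally_geodesic hypr_dist HypR X" and "\<not> is_geodesic hypr_dist HypR X"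
    using NT by (simp_all add: nontrivial_totally_geodesic_def)
  have Y: "fst ` X \<subseteq> hyperboloid" using totally_geodesic_subset[OF TG] by (auto simp: HypR_def)
  have "P \<noteq> Q" using \<open>snd P \<noteq> snd Q\<close> by blast
  then have "fst P \<noteq> fst Q" using inj_onD[OF inj _ P Q] by blast
  have "line_through P Q \<subseteq> X" using totally_geodesic_line_through[OF TG P Q \<open>P \<noteq> Q\<close>] .
  moreover have "P \<in> HypR" "Q \<in> HypR" using P Q totally_geodesic_subset[OF TG] by blast+
  then have "X \<noteq> line_through P Q"
    using \<open>\<not> is_geodesic hypr_dist HypR X\<close> is_geodesic_line_through \<open>P \<noteq> Q\<close> by metis
  ultimately obtain R where R: "R \<in> X" "R \<notin> line_through P Q" by blast
  have "fst R \<notin> hyp_line (fst P) (fst Q)"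
    by (rule totally_geodesic_graph_not_in_flat[OF TG inj, of "fst P" "snd P" "fst Q" "snd Q" "fst R" "snd R"])
      (use P Q R \<open>snd P \<noteq> snd Q\<close> in simp_all)
  moreover have PQR: "fst P \<in> fst ` X" "fst Q \<in> fst ` X" "fst R \<in> fst ` X" using P Q R(1) by blast+
  ultimately have "fst ` X = hyperboloid"
    using hyp_line_closed_eq_hyperboloid[OF Y fst_image_hyp_line_closed[OF TG] PQR \<open>fst P \<noteq> fst Q\<close>]
    by simp
  define f where "f Z = (THE t. (Z, t) \<in> X)" for Z
  have f: "f (fst S) = snd S" if "S \<in> X" for S using the_snd_inj_on_fst[OF inj that] by (simp add: f_def)
  have graph: "(Z, f Z) \<in> X" if "Z \<in> hyperboloid" for Z
  proof -
    have "Z \<in> fst ` X" using that \<open>fst ` X = hyperboloid\<close> by simp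
    then obtain S where "S \<in> X" "Z = fst S" by (rule imageE)
    then show ?thesis using f by simp
  qed
  have "affine_on_geodesics f" using totally_geodesic_graph_affine[OF TG inj graph] .
  moreover have "fst P \<in> hyperboloid" "fst Q \<in> hyperboloid" using P Q Y by blast+
  ultimately have "f (fst P) = f (fst Q)" by (rule affine_on_geodesics_const)
  then show False using f[OF P] f[OF Q] \<open>snd P \<noteq> snd Q\<close> by simp
qed

theorem nontrivial_totally_geodesic_HypR:
  assumes NT: "nontrivial_totally_geodesic hypr_dist HypR X"
  shows "(\<exists>r. X = hyperboloid \<times> {r}) \<or> (\<exists>\<gamma>. is_geodesic hyp_dist hyperboloid \<gamma> \<and> X = \<gamma> \<times> UNIV)"
proof (cases "inj_on fst X")
  case False
  then obtain P Q where "P \<in> X" "Q \<in> X" "fst P = fst Q" "P \<noteq> Q" unfolding inj_on_def by blast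
  then have "(fst P, snd P) \<in> X" "(fst P, snd Q) \<in> X" "snd P \<noteq> snd Q"
    by (simp_all add: prod_eq_iff) (metis prod.collapse)
  then show ?thesis using nontrivial_totally_geodesic_vertical[OF NT] by blast
next
  case True
  obtain P where P: "P \<in> X" using NT by (auto simp: nontrivial_totally_geodesic_def totally_geodesic_def)
  show ?thesis
  proof (cases "X \<subseteq> UNIV \<times> {snd P}")
    case True
    then show ?thesis using nontrivial_totally_geodesic_horizontal[OF NT] by blast
  next
    case False
    then obtain Q where "Q \<in> X" "Q \<notin> UNIV \<times> {snd P}" by blast
    then have "snd P \<noteq> snd Q" by (auto simp: mem_Times_iff)
    then show ?thesis using nontrivial_totally_geodesic_not_graph[OF NT \<open>inj_on fst X\<close> P \<open>Q \<in> X\<close>] by simp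
  qed
qed

section \<open>Transfer to the upper half-plane\<close>

lemma local_isometry_line_image:
  assumes T: "\<And>p. p \<in> S \<Longrightarrow> T p \<in> S'" and iso: "\<And>p q. p \<in> S \<Longrightarrow> q \<in> S \<Longrightarrow> d' (T p) (T q) = d p q"
    and c: "local_isometry_line d S c"
  shows "local_isometry_line d' S' (T \<circ> c)"
  unfolding local_isometry_line_def
proof (intro conjI allI)
  have cS: "c t \<in> S" for t using c by (simp add: local_isometry_line_def)
  fix t
  show "(T \<circ> c) t \<in> S'" using T cS by simp
  obtain e where "e > 0" "\<forall>s u. \<bar>s - t\<bar> < e \<longrightarrow> \<bar>u - t\<bar> < e \<longrightarrow> d (c s) (c u) = \<bar>s - u\<bar>"
    using c unfolding local_isometry_line_def by blast
  then show "\<exists>e>0. \<forall>s u. \<bar>s - t\<bar> < e \<longrightarrow> \<bar>u - t\<bar> < e \<longrightarrow> d' ((T \<circ> c) s) ((T \<circ> c) u) = \<bar>s - u\<bar>"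
    using iso cS by (intro exI[of _ e]) simp
qed

lemma is_geodesic_image:
  assumes T: "\<And>p. p \<in> S \<Longrightarrow> T p \<in> S'" and iso: "\<And>p q. p \<in> S \<Longrightarrow> q \<in> S \<Longrightarrow> d' (T p) (T q) = d p q"
    and "is_geodesic d S G"
  shows "is_geodesic d' S' (T ` G)"
proof -
  obtain c where c: "local_isometry_line d S c" "G = range c" using assms(3) by (auto simp: is_geodesic_def)
  then have "T ` G = range (T \<circ> c)" by (simp add: image_comp)
  then show ?thesis
    using local_isometry_line_image[of S T S' d' d, OF T iso c(1)] unfolding is_geodesic_def by blast
qed

lemma totally_geodesic_image:
  assumes T: "\<And>p. p \<in> S \<Longrightarrow> T p \<in> S'" and iso: "\<And>p q. p \<in> S \<Longrightarrow> q \<in> S \<Longrightarrow> d' (T p) (T q) = d p q"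
    and X: "totally_geodesic d S X"
  shows "totally_geodesic d' S' (T ` X)"
  unfolding totally_geodesic_def
proof (intro conjI ballI)
  show "T ` X \<noteq> {}" using X by (simp add: totally_geodesic_def)
  show "T ` X \<subseteq> S'" using T totally_geodesic_subset[OF X] by blast
next
  fix p' q' assume "p' \<in> T ` X" "q' \<in> T ` X"
  then obtain p q where "p \<in> X" "q \<in> X" "p' = T p" "q' = T q" by blast
  then obtain G where "is_geodesic d S G" "G \<subseteq> X" "p \<in> G" "q \<in> G"
    using X unfolding totally_geodesic_def by blast
  then show "\<exists>G. is_geodesic d' S' G \<and> G \<subseteq> T ` X \<and> p' \<in> G \<and> q' \<in> G"
    using is_geodesic_image[of S T S' d' d, OF T iso] \<open>p' = T p\<close> \<open>q' = T q\<close> by blast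
qed

lemma nontrivial_totally_geodesic_image:
  assumes bij: "bij_betw T S S'" and iso: "\<And>p q. p \<in> S \<Longrightarrow> q \<in> S \<Longrightarrow> d' (T p) (T q) = d p q"
    and X: "nontrivial_totally_geodesic d S X"
  shows "nontrivial_totally_geodesic d' S' (T ` X)"
proof -
  have TG: "totally_geodesic d S X" and "\<not> is_geodesic d S X" "X \<noteq> S"
    using X by (simp_all add: nontrivial_totally_geodesic_def)
  have "X \<subseteq> S" using TG by (rule totally_geodesic_subset)
  have inj: "inj_on T S" and "T ` S = S'" using bij by (simp_all add: bij_betw_def)
  have T: "T p \<in> S'" if "p \<in> S" for p using \<open>T ` S = S'\<close> that by blast
  define T' where "T' = the_inv_into S T"
  have T': "T' q \<in> S" "T (T' q) = q" if "q \<in> S'" for q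
    using the_inv_into_into[OF inj, of q S] f_the_inv_into_f[OF inj, of q] that \<open>T ` S = S'\<close>
    by (simp_all add: T'_def)
  have iso': "d (T' p) (T' q) = d' p q" if "p \<in> S'" "q \<in> S'" for p q
    using iso[OF T'(1)[OF that(1)] T'(1)[OF that(2)]] T'(2) that by simp
  have "T' ` T ` X = (\<lambda>x. x) ` X"
    unfolding image_image using \<open>X \<subseteq> S\<close> the_inv_into_f_f[OF inj]
    by (intro image_cong) (auto simp: T'_def)
  then have T'_T: "T' ` T ` X = X" by simp
  have "\<not> is_geodesic d' S' (T ` X)"
  proof
    assume geo: "is_geodesic d' S' (T ` X)"
    have "is_geodesic d S (T' ` T ` X)"
      by (rule is_geodesic_image[of S' T' S d d']) (use T'(1) iso' geo in auto)
    then show False using T'_T \<open>\<not> is_geodesic d S X\<close> by simp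
  qed
  moreover have "T ` X \<noteq> S'"
    using \<open>X \<noteq> S\<close> inj_on_image_eq_iff[OF inj \<open>X \<subseteq> S\<close> subset_refl] \<open>T ` S = S'\<close> by simp
  ultimately show ?thesis
    using totally_geodesic_image[OF T iso TG] by (simp add: nontrivial_totally_geodesic_def)
qed

lemma bij_betw_hp_to_hyp: "bij_betw hp_to_hyp H2 hyperboloid"
proof (rule bij_betw_byWitness[where f' = hyp_to_hp])
  show "\<forall>z\<in>H2. hyp_to_hp (hp_to_hyp z) = z" by (simp add: H2_def hyp_to_hp_inverse)
  show "\<forall>X\<in>hyperboloid. hp_to_hyp (hyp_to_hp X) = X" by (simp add: hp_to_hyp_inverse)
  show "hp_to_hyp ` H2 \<subseteq> hyperboloid" by (auto simp: H2_def hp_to_hyp_in_hyperboloid)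
  show "hyp_to_hp ` hyperboloid \<subseteq> H2" by (auto simp: H2_def Im_hyp_to_hp)
qed

lemma hyp_to_hp_image: "hyp_to_hp ` hyperboloid = H2"
proof (intro subset_antisym subsetI)
  fix z assume "z \<in> H2"
  then have "z = hyp_to_hp (hp_to_hyp z)" "hp_to_hyp z \<in> hyperboloid"
    by (simp_all add: H2_def hyp_to_hp_inverse hp_to_hyp_in_hyperboloid)
  then show "z \<in> hyp_to_hp ` hyperboloid" by blast
qed (auto simp: H2_def Im_hyp_to_hp)

theorem mainTheorem3:
  assumes "nontrivial_totally_geodesic pdist HR X"
  shows "(\<exists>r. X = H2 \<times> {r}) \<or> (\<exists>\<gamma>. is_geodesic hdist H2 \<gamma> \<and> X = \<gamma> \<times> UNIV)"
proof -
  define T where "T = map_prod hp_to_hyp (id :: real \<Rightarrow> real)"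
  have bij: "bij_betw T HR HypR"
    unfolding T_def HR_def HypR_def by (rule bij_betw_map_prod[OF bij_betw_hp_to_hyp bij_betw_id])
  have iso: "hypr_dist (T p) (T q) = pdist p q" if "p \<in> HR" "q \<in> HR" for p q
    using that hdist_eq_hyp_dist by (auto simp: T_def HR_def H2_def hypr_dist_def pdist_def)
  have "map_prod hyp_to_hp id ` T ` X = (\<lambda>p. p) ` X"
    unfolding image_image T_def using assms hyp_to_hp_inverse
    by (intro image_cong) (auto simp: nontrivial_totally_geodesic_def totally_geodesic_def HR_def H2_def)
  then have X_eq: "map_prod hyp_to_hp id ` T ` X = X" by simp
  have hyp_iso: "hdist (hyp_to_hp p) (hyp_to_hp q) = hyp_dist p q" if "p \<in> hyperboloid" "q \<in> hyperboloid" for p q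
    using that hdist_eq_hyp_dist[OF Im_hyp_to_hp Im_hyp_to_hp] by (simp add: hp_to_hyp_inverse)
  have "nontrivial_totally_geodesic hypr_dist HypR (T ` X)"
    by (rule nontrivial_totally_geodesic_image[OF bij _ assms]) (use iso in blast)
  from nontrivial_totally_geodesic_HypR[OF this] show ?thesis
  proof (elim disjE exE conjE)
    fix r assume "T ` X = hyperboloid \<times> {r}"
    then have "X = hyp_to_hp ` hyperboloid \<times> {r}" using X_eq by (simp add: map_prod_surj_on)
    then show ?thesis unfolding hyp_to_hp_image by blast
  next
    fix \<gamma> assume "is_geodesic hyp_dist hyperboloid \<gamma>" "T ` X = \<gamma> \<times> UNIV"
    then have "is_geodesic hdist H2 (hyp_to_hp ` \<gamma>)"
      using is_geodesic_image[of hyperboloid hyp_to_hp H2 hdist hyp_dist] hyp_iso Im_hyp_to_hp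
      by (simp add: H2_def)
    moreover have "X = hyp_to_hp ` \<gamma> \<times> UNIV"
      using X_eq \<open>T ` X = \<gamma> \<times> UNIV\<close> by (simp add: map_prod_surj_on)
    ultimately show ?thesis by blast
  qed
qed

end
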